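(* Assume all conditions (C1)–(C6) below hold and $p(X)=p(\tilde X)=q(V^\top X)$. Write $A\preceq B$ if the asymptotic variance (of $\sqrt{nh^l}(\hat\tau-\tau(z))$) of estimator $A$ is not greater than that of $B$ at every $z$, and $A\cong B$ if they are equal. Then for each $z$ in the support of $Z$: Case 1: If $\tilde X=X$ (so $|Z\cap\tilde X|=l$) and $|Z\cap V^\top X|=l$, then IPW-N $\preceq$ IPW-S $\preceq$ IPW-P $\cong$ IPW-O, and more precisely $$\sigma_P^2(z)=\sigma_S^{*2}(z)+E\Big[q(V^\top X)(1-q(V^\top X))\Big\{\frac{m_1(V^\top X)}{q(V^\top X)}+\frac{m_0(V^\top X)}{1-q(V^\top X)}\Big\}^2\Big|Z=z\Big],$$ $$\sigma_S^{*2}(z)=\sigma_N^{*2}(z)+E\Big[q(V^\top X)(1-q(V^\top X))\Big\{\frac{\Delta m_1}{q(V^\top X)}+\frac{\Delta m_0}{1-q(V^\top X)}\Big\}^2\Big|Z=z\Big],$$ where $\Delta m_j=m_j(X)-m_j(V^\top X)$. Case 2: If $\tilde X=X$ but $|Z\cap V^\top X|=t$ with $0\le t<l$ (and $s_2[2-l/(l-t)]+l>0$), then IPW-N $\preceq$ IPW-S $\cong$ IPW-P $\cong$ IPW-O, with $\sigma_S^2(z)=\sigma_P^2(z)=\sigma_O^2(z)$. Case 3: If $\tilde X\subsetneq X$ with $|Z\cap\tilde X|=t$ and $|Z\cap V^\top X|=t$, $0\le t<l$ (and $s_1[2-l/(l-t)]+l>0$, $s_2[2-l/(l-t)]+l>0$),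 then IPW-N $\cong$ IPW-S $\cong$ IPW-P $\cong$ IPW-O, with $\sigma_N^2(z)=\sigma_S^2(z)=\sigma_P^2(z)=\sigma_O^2(z)$.
   Context: Setting: $D\in\{0,1\}$ binary treatment, potential outcomes $Y(0),Y(1)$, observed $Y=DY(1)+(1-D)Y(0)$; covariates $X=(Z^\top,U^\top)^\top\in\mathbb R^k$, $Z\in\mathbb R^l$, $k$ fixed, $X$ absolutely continuous; $\mathcal W=(X,D,Y)$, data i.i.d. copies $\mathcal W_i$, $i\le n$. $p(X)=P(D=1\mid X)$, $f$ density of $Z$, $\tau(z)=E[Y(1)-Y(0)\mid Z=z]$. $K$ kernel on $\mathbb R^l$, $K_h(u)=h^{-l}K(u/h)$, $\|K\|_2^2=\int K^2$. Kernel of order $s$: integrates to one, all moments of total degree $1,\dots,s-1$ vanish, some of degree $s$ nonzero. $m_j(X)=E[Y(j)\mid X]$, $m_j(V^\top X)=E[Y(j)\mid V^\top X]$. Structures: $p(X)=q(V^\top X)$, $V$ an unknown $k\times r$ orthonormal matrix; $\tilde X$ a subvector of $X$ of dimension $\tilde k$ with $D\perp X\mid\tilde X$. $|Z\cap A|=t$ means exactly $t$ components of $Z$ are components of the vector $A$ (for $V^\top X$, up to rotation). Estimators, each of the form $\Big(\sum_i\Big[\frac{D_iY_i}{\pi_i}-\frac{(1-D_i)Y_i}{1-\pi_i}\Big]K_h(Z_i-z)\Big)/\sum_iK_h(Z_i-z)$ with: IPW-O: $\pi_i=p(X_i)$ (true score); IPW-P: $\pi_i=p(X_i;\hat\beta)$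 from a correctly specified parametric model estimated at rate $n^{-1/2}$; IPW-S: $\pi_i=\hat q(\hat V^\top X_i)=\sum_{j\ne i}D_j\mathcal H_{h_2}(\hat V^\top X_j-\hat V^\top X_i)/\sum_{j\ne i}\mathcal H_{h_2}(\hat V^\top X_j-\hat V^\top X_i)$ with $\mathcal H_{h_2}(u)=h_2^{-r}\mathcal H(u/h_2)$; IPW-N: $\pi_i=\hat p(\tilde X_i)=\sum_{j\ne i}D_j\mathcal L_{h_1}(\tilde X_j-\tilde X_i)/\sum_{j\ne i}\mathcal L_{h_1}(\tilde X_j-\tilde X_i)$ with $\mathcal L_{h_1}(u)=h_1^{-\tilde k}\mathcal L(u/h_1)$. Asymptotic variances of $\sqrt{nh^l}(\hat\tau-\tau(z))$ are $\|K\|_2^2\sigma^2(z)/f(z)$ with: $\sigma_O^2(z)=E([\frac{DY}{p(X)}-\frac{(1-D)Y}{1-p(X)}-\tau(z)]^2\mid Z=z)$; $\sigma_P^2(z)$ the IPW-P variance (known to equal $\sigma_O^2(z)$); $\sigma_S^2(z)=E[\{\psi(q(V^\top X),\mathcal W)-\tau(z)\}^2\mid Z=z]$, $\sigma_S^{*2}(z)=E[\{\psi^*(q(V^\top X),\mathcal W)-\tau(z)\}^2\mid Z=z]$, $\sigma_N^2(z)=E[\{\psi(p(\tilde X),\mathcal W)-\tau(z)\}^2\mid Z=z]$, $\sigma_N^{*2}(z)=E[\{\psi^*(p(\tilde X),\mathcal W)-\tau(z)\}^2\mid Z=z]$, where for a score function $\pi$ of a vector $A$ (either $A=V^\top X$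 with $\pi=q$, or $A=\tilde X$ with $\pi=p$), $\psi(\pi(A),\mathcal W)=\frac{DY}{\pi(A)}-\frac{(1-D)Y}{1-\pi(A)}$ and $\psi^*(\pi(A),\mathcal W)=\frac{D\{Y-m_1(A)\}}{\pi(A)}-\frac{(1-D)\{Y-m_0(A)\}}{1-\pi(A)}+m_1(A)-m_0(A)$, $m_j(A)=E[Y(j)\mid A]$. (IPW-S has variance $\sigma_S^{*2}$ if $|Z\cap V^\top X|=l$ and $\sigma_S^2$ if $<l$; IPW-N has $\sigma_N^{*2}$ if $|Z\cap\tilde X|=l$ and $\sigma_N^2$ if $<l$.) Conditions: (C1) $(Y(0),Y(1))\perp D\mid X$, $c<p(X)<1-c$. (C2) Support of $X$ a Cartesian product of compact intervals; densities of $Z$, $X$ bounded away from zero and infinity, $s\ge r$ times continuously differentiable. (C3) $\sup_xE[Y(j)^2\mid X=x]<\infty$; $m_j(V^\top X)$ $s\ge r$ times continuously differentiable. (C4) $\mathcal L$ kernel of order $s_1$, symmetric, supported on $[-1,1]^{\tilde k}$, continuously differentiable; $\mathcal H$ kernel of order $s_2$, symmetric, supported on $[-1,1]^r$, continuously differentiable; $K$ kernel of order $s$, symmetric, $s$ times continuously differentiable. (C5) $h\to0$, $nh^l\to\infty$, $nh^{2s+l}\to0$; $h_1,h_2\to0$, $\log(n)/(nh_2^{r+s_2})\to0$, $\log(n)/(nh_1^{\tilde k+s_1})\to0$; $h_i^{2s_i}h^{-2s_i-l}\to0$ and $nh^lh_i^{2s_i}\to0$, $i=1,2$. (C6) $r$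 known, $\hat V-V=O_p(n^{-1/2})$. *)

theory Defs
  imports "HOL-Probability.Probability"
begin

definition condE :: "'a measure \<Rightarrow> ('a \<Rightarrow> 'b::topological_space) \<Rightarrow> ('a \<Rightarrow> real) \<Rightarrow> 'a \<Rightarrow> real" where
  "condE M W f = real_cond_exp M (vimage_algebra (space M) W borel) f"

definition cond_indep :: "'a measure \<Rightarrow> ('a \<Rightarrow> 'u::topological_space) \<Rightarrow> ('a \<Rightarrow> 'w::topological_space)
     \<Rightarrow> ('a \<Rightarrow> 'x::topological_space) \<Rightarrow> bool" where
  "cond_indep M U W X \<longleftrightarrow>
     (\<forall>B \<in> sets borel. \<forall>C \<in> sets borel. AE \<omega> in M.
        condE M X (\<lambda>\<omega>. indicator B (U \<omega>) * indicator C (W \<omega>)) \<omega>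
        = condE M X (\<lambda>\<omega>. indicator B (U \<omega>)) \<omega> * condE M X (\<lambda>\<omega>. indicator C (W \<omega>)) \<omega>)"

definition subvec :: "('l \<Rightarrow> 'k) \<Rightarrow> real^'k \<Rightarrow> real^'l" where
  "subvec idx x = (\<chi> i. x $ idx i)"

definition Yobs :: "('a \<Rightarrow> real) \<Rightarrow> ('a \<Rightarrow> real) \<Rightarrow> ('a \<Rightarrow> real) \<Rightarrow> 'a \<Rightarrow> real" where
  "Yobs D Y1 Y0 \<omega> = D \<omega> * Y1 \<omega> + (1 - D \<omega>) * Y0 \<omega>"

definition psi :: "real \<Rightarrow> real \<Rightarrow> real \<Rightarrow> real" where
  "psi \<pi> d y = d * y / \<pi> - (1 - d) * y / (1 - \<pi>)"

definition psistar :: "real \<Rightarrow> real \<Rightarrow> real \<Rightarrow> real \<Rightarrow> real \<Rightarrow> real" where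
  "psistar \<pi> m1 m0 d y = d * (y - m1) / \<pi> - (1 - d) * (y - m0) / (1 - \<pi>) + m1 - m0"

definition sig2 :: "'a measure \<Rightarrow> ('a \<Rightarrow> 'z::topological_space) \<Rightarrow> ('a \<Rightarrow> real) \<Rightarrow> ('a \<Rightarrow> real)
     \<Rightarrow> ('a \<Rightarrow> real) \<Rightarrow> 'a \<Rightarrow> real" where
  "sig2 M Z Y1 Y0 g = condE M Z (\<lambda>\<omega>. (g \<omega> - condE M Z (\<lambda>\<omega>'. Y1 \<omega>' - Y0 \<omega>') \<omega>)\<^sup>2)"

text \<open>Z = subvector of X via zidx; Xt = subvector of X via tidx; A = V^T X.\<close>
definition sigma_O :: "'a measure \<Rightarrow> ('a \<Rightarrow> real^'k::finite) \<Rightarrow> ('a \<Rightarrow> real) \<Rightarrow> ('a \<Rightarrow> real) \<Rightarrow> ('a \<Rightarrow> real)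
     \<Rightarrow> ('l::finite \<Rightarrow> 'k) \<Rightarrow> 'a \<Rightarrow> real" where
  "sigma_O M X D Y0 Y1 zidx = sig2 M (\<lambda>\<omega>. subvec zidx (X \<omega>)) Y1 Y0
     (\<lambda>\<omega>. psi (condE M X D \<omega>) (D \<omega>) (Yobs D Y1 Y0 \<omega>))"

text \<open>The IPW-P variance is known (prior result in the paper) to equal sigma_O.\<close>
definition sigma_P :: "'a measure \<Rightarrow> ('a \<Rightarrow> real^'k::finite) \<Rightarrow> ('a \<Rightarrow> real) \<Rightarrow> ('a \<Rightarrow> real) \<Rightarrow> ('a \<Rightarrow> real)
     \<Rightarrow> ('l::finite \<Rightarrow> 'k) \<Rightarrow> 'a \<Rightarrow> real" where
  "sigma_P M X D Y0 Y1 zidx = sigma_O M X D Y0 Y1 zidx"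

definition sigma_S :: "'a measure \<Rightarrow> ('a \<Rightarrow> real^'k::finite) \<Rightarrow> ('a \<Rightarrow> real) \<Rightarrow> ('a \<Rightarrow> real) \<Rightarrow> ('a \<Rightarrow> real)
     \<Rightarrow> ('l::finite \<Rightarrow> 'k) \<Rightarrow> real^'r::finite^'k \<Rightarrow> 'a \<Rightarrow> real" where
  "sigma_S M X D Y0 Y1 zidx V = sig2 M (\<lambda>\<omega>. subvec zidx (X \<omega>)) Y1 Y0
     (\<lambda>\<omega>. psi (condE M (\<lambda>\<omega>. transpose V *v X \<omega>) D \<omega>) (D \<omega>) (Yobs D Y1 Y0 \<omega>))"

definition sigma_Sstar :: "'a measure \<Rightarrow> ('a \<Rightarrow> real^'k::finite) \<Rightarrow> ('a \<Rightarrow> real) \<Rightarrow> ('a \<Rightarrow> real) \<Rightarrow> ('a \<Rightarrow> real)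
     \<Rightarrow> ('l::finite \<Rightarrow> 'k) \<Rightarrow> real^'r::finite^'k \<Rightarrow> 'a \<Rightarrow> real" where
  "sigma_Sstar M X D Y0 Y1 zidx V = sig2 M (\<lambda>\<omega>. subvec zidx (X \<omega>)) Y1 Y0
     (\<lambda>\<omega>. psistar (condE M (\<lambda>\<omega>. transpose V *v X \<omega>) D \<omega>)
                  (condE M (\<lambda>\<omega>. transpose V *v X \<omega>) Y1 \<omega>)
                  (condE M (\<lambda>\<omega>. transpose V *v X \<omega>) Y0 \<omega>)
                  (D \<omega>) (Yobs D Y1 Y0 \<omega>))"

definition sigma_N :: "'a measure \<Rightarrow> ('a \<Rightarrow> real^'k::finite) \<Rightarrow> ('a \<Rightarrow> real) \<Rightarrow> ('a \<Rightarrow> real) \<Rightarrow> ('a \<Rightarrow> real)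
     \<Rightarrow> ('l::finite \<Rightarrow> 'k) \<Rightarrow> ('kt::finite \<Rightarrow> 'k) \<Rightarrow> 'a \<Rightarrow> real" where
  "sigma_N M X D Y0 Y1 zidx tidx = sig2 M (\<lambda>\<omega>. subvec zidx (X \<omega>)) Y1 Y0
     (\<lambda>\<omega>. psi (condE M (\<lambda>\<omega>. subvec tidx (X \<omega>)) D \<omega>) (D \<omega>) (Yobs D Y1 Y0 \<omega>))"

definition sigma_Nstar :: "'a measure \<Rightarrow> ('a \<Rightarrow> real^'k::finite) \<Rightarrow> ('a \<Rightarrow> real) \<Rightarrow> ('a \<Rightarrow> real) \<Rightarrow> ('a \<Rightarrow> real)
     \<Rightarrow> ('l::finite \<Rightarrow> 'k) \<Rightarrow> ('kt::finite \<Rightarrow> 'k) \<Rightarrow> 'a \<Rightarrow> real" where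
  "sigma_Nstar M X D Y0 Y1 zidx tidx = sig2 M (\<lambda>\<omega>. subvec zidx (X \<omega>)) Y1 Y0
     (\<lambda>\<omega>. psistar (condE M (\<lambda>\<omega>. subvec tidx (X \<omega>)) D \<omega>)
                  (condE M (\<lambda>\<omega>. subvec tidx (X \<omega>)) Y1 \<omega>)
                  (condE M (\<lambda>\<omega>. subvec tidx (X \<omega>)) Y0 \<omega>)
                  (D \<omega>) (Yobs D Y1 Y0 \<omega>))"

text \<open>|Z cap V^T X|: number of components of Z that are components of V^T X up to rotation,
  i.e. whose coordinate axis lies in the column space of V.\<close>
definition cnt_A :: "('l::finite \<Rightarrow> 'k::finite) \<Rightarrow> real^'r::finite^'k \<Rightarrow> nat" where
  "cnt_A zidx V = card {i. axis (zidx i) (1::real) \<in> range (\<lambda>c. V *v c)}"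

definition cnt_T :: "('l::finite \<Rightarrow> 'k) \<Rightarrow> ('kt::finite \<Rightarrow> 'k) \<Rightarrow> nat" where
  "cnt_T zidx tidx = card {i. zidx i \<in> range tidx}"

text \<open>Asymptotic variances (up to the common positive factor ||K||^2 / f(z)),
  as given in the paper's context.\<close>
definition avar_O where "avar_O M X D Y0 Y1 zidx = sigma_O M X D Y0 Y1 zidx"
definition avar_P where "avar_P M X D Y0 Y1 zidx = sigma_P M X D Y0 Y1 zidx"
definition avar_S :: "'a measure \<Rightarrow> ('a \<Rightarrow> real^'k) \<Rightarrow> ('a \<Rightarrow> real) \<Rightarrow> ('a \<Rightarrow> real) \<Rightarrow> ('a \<Rightarrow> real)
     \<Rightarrow> ('l::finite \<Rightarrow> 'k::finite) \<Rightarrow> real^'r::finite^'k \<Rightarrow> 'a \<Rightarrow> real" where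
  "avar_S M X D Y0 Y1 zidx V =
     (if cnt_A zidx V = CARD('l) then sigma_Sstar M X D Y0 Y1 zidx V else sigma_S M X D Y0 Y1 zidx V)"
definition avar_N :: "'a measure \<Rightarrow> ('a \<Rightarrow> real^'k) \<Rightarrow> ('a \<Rightarrow> real) \<Rightarrow> ('a \<Rightarrow> real) \<Rightarrow> ('a \<Rightarrow> real)
     \<Rightarrow> ('l::finite \<Rightarrow> 'k::finite) \<Rightarrow> ('kt::finite \<Rightarrow> 'k) \<Rightarrow> 'a \<Rightarrow> real" where
  "avar_N M X D Y0 Y1 zidx tidx =
     (if cnt_T zidx tidx = CARD('l) then sigma_Nstar M X D Y0 Y1 zidx tidx else sigma_N M X D Y0 Y1 zidx tidx)"

definition avar_le :: "'a measure \<Rightarrow> ('a \<Rightarrow> real) \<Rightarrow> ('a \<Rightarrow> real) \<Rightarrow> bool" where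
  "avar_le M a b \<longleftrightarrow> (AE \<omega> in M. a \<omega> \<le> b \<omega>)"
definition avar_eq :: "'a measure \<Rightarrow> ('a \<Rightarrow> real) \<Rightarrow> ('a \<Rightarrow> real) \<Rightarrow> bool" where
  "avar_eq M a b \<longleftrightarrow> (AE \<omega> in M. a \<omega> = b \<omega>)"

end

theory Submission
  imports Defs
begin

text \<open>Every asymptotic variance in the statement is a conditional second moment, given \<open>Z\<close>, of an
  augmented inverse-propensity score \<open>\<psi>\<^sup>*(q, a\<^sub>1, a\<^sub>0) - \<tau>(Z)\<close> built from the common propensity
  \<open>q(V\<^sup>T X) = p(X) = p(X\<^sub>t)\<close> and some regression adjustment \<open>a\<close> (none, \<open>m\<^sub>j(V\<^sup>T X)\<close> or \<open>m\<^sub>j(X)\<close>).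
  Let \<open>F\<close> be a \<open>\<sigma>\<close>-algebra with \<open>E[D | F] = q\<close> and \<open>E[D Y(j) | F] = q E[Y(j) | F]\<close>; unconfoundedness
  gives this for \<open>F = \<sigma>(X)\<close> and, by the tower property, for \<open>F = \<sigma>(V\<^sup>T X)\<close>. Replacing the
  adjustment \<open>b = E[Y | F]\<close> by an \<open>F\<close>-measurable \<open>a\<close> adds \<open>(D - q) h\<close> with
  \<open>h = (b\<^sub>1 - a\<^sub>1)/q + (b\<^sub>0 - a\<^sub>0)/(1 - q)\<close>, while \<open>\<psi>\<^sup>*(q, b) - \<tau>\<close> is conditionally orthogonal to
  \<open>D - q\<close> given \<open>F\<close> and \<open>E[(D - q)\<^sup>2 | F] = q(1 - q)\<close>. Hence the second moment given \<open>Z\<close> splits off the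
  nonnegative term \<open>E[q(1 - q) h\<^sup>2 | Z]\<close>. Taking \<open>F = \<sigma>(X)\<close> and, when \<open>Z\<close> is a function of \<open>V\<^sup>T X\<close>,
  \<open>F = \<sigma>(V\<^sup>T X)\<close> yields the identities and inequalities of the three cases.\<close>

section \<open>Square-integrable functions\<close>

lemma abs_mult_le_sum_squares: "\<bar>x * y\<bar> \<le> x\<^sup>2 + (y::real)\<^sup>2"
proof -
  have "2 * (\<bar>x\<bar> * \<bar>y\<bar>) \<le> x\<^sup>2 + y\<^sup>2"
    using sum_squares_bound[of "\<bar>x\<bar>" "\<bar>y\<bar>"] by (simp add: mult.assoc)
  moreover have "0 \<le> \<bar>x\<bar> * \<bar>y\<bar>" by simp
  ultimately show ?thesis unfolding abs_mult by linarith
qed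

lemma power2_sum_le: "(x + y)\<^sup>2 \<le> 2 * x\<^sup>2 + 2 * (y::real)\<^sup>2"
  using sum_squares_bound[of x y] by (simp add: power2_sum)

definition square_integrable :: "'a measure \<Rightarrow> ('a \<Rightarrow> real) \<Rightarrow> bool" where
  "square_integrable M f \<longleftrightarrow> f \<in> borel_measurable M \<and> integrable M (\<lambda>x. (f x)\<^sup>2)"

lemma square_integrable_measurable [measurable_dest]:
  "square_integrable M f \<Longrightarrow> f \<in> borel_measurable M"
  by (simp add: square_integrable_def)

context prob_space
begin

lemma square_integrable_integrable: "square_integrable M f \<Longrightarrow> integrable M f"
  by (simp add: square_integrable_def square_integrable_imp_integrable)

lemma square_integrable_mult_integrable:
  assumes "square_integrable M f" "square_integrable M g"
  shows "integrable M (\<lambda>x. f x * g x)"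
proof (rule Bochner_Integration.integrable_bound)
  show "integrable M (\<lambda>x. (f x)\<^sup>2 + (g x)\<^sup>2)"
    using assms by (simp add: square_integrable_def)
  have "norm (f x * g x) \<le> norm ((f x)\<^sup>2 + (g x)\<^sup>2)" for x
    using abs_mult_le_sum_squares[of "f x" "g x"] by simp
  then show "AE x in M. norm (f x * g x) \<le> norm ((f x)\<^sup>2 + (g x)\<^sup>2)"
    by simp
qed (use assms in measurable)

lemma square_integrable_add:
  assumes "square_integrable M f" "square_integrable M g"
  shows "square_integrable M (\<lambda>x. f x + g x)"
proof -
  have "integrable M (\<lambda>x. (f x + g x)\<^sup>2)"
  proof (rule Bochner_Integration.integrable_bound)
    show "integrable M (\<lambda>x. 2 * (f x)\<^sup>2 + 2 * (g x)\<^sup>2)"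
      using assms by (simp add: square_integrable_def)
    have "norm ((f x + g x)\<^sup>2) \<le> norm (2 * (f x)\<^sup>2 + 2 * (g x)\<^sup>2)" for x
      using power2_sum_le[of "f x" "g x"] by simp
    then show "AE x in M. norm ((f x + g x)\<^sup>2) \<le> norm (2 * (f x)\<^sup>2 + 2 * (g x)\<^sup>2)"
      by simp
  qed (use assms in measurable)
  moreover have "(\<lambda>x. f x + g x) \<in> borel_measurable M"
    using assms by measurable
  ultimately show ?thesis
    by (simp add: square_integrable_def)
qed

lemma square_integrable_cmult:
  assumes "square_integrable M f"
  shows "square_integrable M (\<lambda>x. c * f x)"
proof -
  have "(\<lambda>x. c * f x) \<in> borel_measurable M"
    using assms by measurable
  with assms show ?thesis
    by (simp add: square_integrable_def power_mult_distrib)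
qed

lemma square_integrable_diff:
  assumes "square_integrable M f" "square_integrable M g"
  shows "square_integrable M (\<lambda>x. f x - g x)"
  using square_integrable_add[OF assms(1) square_integrable_cmult[OF assms(2), of "-1"]] by simp

lemma square_integrable_bounded_mult:
  assumes f: "square_integrable M f" and g: "g \<in> borel_measurable M" "AE x in M. \<bar>g x\<bar> \<le> K"
  shows "square_integrable M (\<lambda>x. g x * f x)"
proof -
  have "integrable M (\<lambda>x. (g x * f x)\<^sup>2)"
  proof (rule Bochner_Integration.integrable_bound)
    show "integrable M (\<lambda>x. K\<^sup>2 * (f x)\<^sup>2)"
      using f by (simp add: square_integrable_def)
    show "AE x in M. norm ((g x * f x)\<^sup>2) \<le> norm (K\<^sup>2 * (f x)\<^sup>2)"
      using g(2)
    proof eventually_elim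
      case (elim x)
      then have "(g x)\<^sup>2 \<le> K\<^sup>2"
        by (simp add: power2_le_iff_abs_le)
      then show ?case
        by (simp add: power_mult_distrib mult_right_mono)
    qed
  qed (use f g in measurable)
  moreover have "(\<lambda>x. g x * f x) \<in> borel_measurable M"
    using f g by measurable
  ultimately show ?thesis
    by (simp add: square_integrable_def)
qed

lemma square_integrable_divide:
  assumes f: "square_integrable M f" and q: "q \<in> borel_measurable M"
    and bound: "c > 0" "AE x in M. c \<le> \<bar>q x\<bar>"
  shows "square_integrable M (\<lambda>x. f x / q x)"
proof -
  have "AE x in M. \<bar>1 / q x\<bar> \<le> 1 / c"
    using bound(2) by eventually_elim (use bound(1) in \<open>simp add: frac_le\<close>)
  from square_integrable_bounded_mult[OF f _ this] show ?thesis
    using q by simp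
qed

end

lemma square_integrable_zero: "square_integrable M (\<lambda>_. 0)"
  by (simp add: square_integrable_def)

lemma integrable_bounded_mult:
  fixes f w :: "'a \<Rightarrow> real"
  assumes f: "integrable M f" and w: "w \<in> borel_measurable M" "AE x in M. \<bar>w x\<bar> \<le> K"
  shows "integrable M (\<lambda>x. w x * f x)"
proof (rule Bochner_Integration.integrable_bound)
  show "integrable M (\<lambda>x. K * f x)"
    using f by simp
  show "AE x in M. norm (w x * f x) \<le> norm (K * f x)"
    using w(2) by eventually_elim (auto simp: abs_mult intro: mult_right_mono)
qed (use f w in measurable)

context prob_space
begin

lemma square_integrable_divide_overlap:
  assumes f: "square_integrable M f" and q: "q \<in> borel_measurable M" "c > 0" "AE x in M. c < q x \<and> q x < 1 - c"
  shows "square_integrable M (\<lambda>x. f x / q x)" "square_integrable M (\<lambda>x. f x / (1 - q x))"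
proof -
  have "AE x in M. c \<le> \<bar>q x\<bar>"
    using q(3) by eventually_elim auto
  then show "square_integrable M (\<lambda>x. f x / q x)"
    by (rule square_integrable_divide[OF f q(1,2)])
  have "AE x in M. c \<le> \<bar>1 - q x\<bar>"
    using q(3) by eventually_elim auto
  then show "square_integrable M (\<lambda>x. f x / (1 - q x))"
    by (intro square_integrable_divide[OF f _ q(2)]) (use q(1) in measurable)
qed

lemma square_integrable_psistar:
  assumes m: "square_integrable M m1" "square_integrable M m0" and Y: "square_integrable M Y"
    and D: "D \<in> borel_measurable M" "AE x in M. \<bar>D x\<bar> \<le> 1"
    and q: "q \<in> borel_measurable M" "c > 0" "AE x in M. c < q x \<and> q x < 1 - c"
  shows "square_integrable M (\<lambda>x. psistar (q x) (m1 x) (m0 x) (D x) (Y x))"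
proof -
  have [measurable]: "D \<in> borel_measurable M" "q \<in> borel_measurable M"
    using D q by simp_all
  have "AE x in M. \<bar>1 - D x\<bar> \<le> 2"
    using D(2) by eventually_elim simp
  then have "square_integrable M (\<lambda>x. D x * (Y x - m1 x))" "square_integrable M (\<lambda>x. (1 - D x) * (Y x - m0 x))"
    using m Y D by (auto intro!: square_integrable_bounded_mult square_integrable_diff)
  then have "square_integrable M (\<lambda>x. D x * (Y x - m1 x) / q x - (1 - D x) * (Y x - m0 x) / (1 - q x)
      + m1 x - m0 x)"
    using m by (intro square_integrable_add square_integrable_diff square_integrable_divide_overlap[OF _ q])
  then show ?thesis
    by (simp add: psistar_def)
qed

lemma square_integrable_Yobs:
  assumes D: "D \<in> borel_measurable M" "AE x in M. \<bar>D x\<bar> \<le> 1"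
    and Y: "square_integrable M Y1" "square_integrable M Y0"
  shows "square_integrable M (Yobs D Y1 Y0)"
proof -
  have "AE x in M. \<bar>1 - D x\<bar> \<le> 2"
    using D(2) by eventually_elim simp
  then have "square_integrable M (\<lambda>x. D x * Y1 x + (1 - D x) * Y0 x)"
    using D Y by (intro square_integrable_add square_integrable_bounded_mult) simp_all
  then show ?thesis
    unfolding Yobs_def .
qed

end

section \<open>Sub-\<open>\<sigma>\<close>-algebras generated by random elements\<close>

lemma subalgebra_refl: "subalgebra M M"
  by (simp add: subalgebra_def)

lemma subalgebra_vimage_algebra:
  "W \<in> borel_measurable M \<Longrightarrow> subalgebra M (vimage_algebra (space M) W borel)"
  unfolding subalgebra_def by (simp add: sets_image_in_sets)

lemma subalgebra_vimage_algebra_comp: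
  assumes "\<phi> \<in> borel_measurable borel" "\<And>x. x \<in> \<Omega> \<Longrightarrow> Z x = \<phi> (W x)"
  shows "subalgebra (vimage_algebra \<Omega> W borel) (vimage_algebra \<Omega> Z borel)"
proof -
  have "(\<lambda>x. \<phi> (W x)) \<in> borel_measurable (vimage_algebra \<Omega> W borel)"
    using measurable_vimage_algebra1[of W \<Omega> borel] assms(1) by measurable
  then have "Z \<in> borel_measurable (vimage_algebra \<Omega> W borel)"
    by (rule measurable_cong[THEN iffD1, rotated]) (simp add: assms(2))
  then show ?thesis
    unfolding subalgebra_def by (simp add: sets_image_in_sets)
qed

lemma vimage_algebra_eqI:
  assumes "subalgebra (vimage_algebra \<Omega> W borel) (vimage_algebra \<Omega> Z borel)"
    and "subalgebra (vimage_algebra \<Omega> Z borel) (vimage_algebra \<Omega> W borel)"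
  shows "vimage_algebra \<Omega> W borel = vimage_algebra \<Omega> Z borel"
  using assms by (intro measure_eqI) (auto simp: subalgebra_def vimage_algebra_def emeasure_sigma)

abbreviation sigma_gen :: "'a measure \<Rightarrow> ('a \<Rightarrow> 'b::topological_space) \<Rightarrow> 'a measure" where
  "sigma_gen M W \<equiv> vimage_algebra (space M) W borel"

lemma borel_measurable_condE [measurable]: "condE M W f \<in> borel_measurable M"
  by (simp add: condE_def)

lemma borel_measurable_subvec [measurable]: "subvec idx \<in> borel_measurable borel"
  unfolding subvec_def by (intro borel_measurable_continuous_onI continuous_intros)

lemma borel_measurable_matrix_vector_mult [measurable]:
  fixes A :: "real^'n::finite^'m::finite"
  shows "(\<lambda>x. A *v x) \<in> borel_measurable borel"
  by (intro borel_measurable_continuous_onI continuous_intros)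

locale prob_space_subalgebra = prob_space M + sigma_finite_subalgebra M F for M F :: "'a measure"

lemma (in prob_space) prob_space_subalgebraI:
  "subalgebra M F \<Longrightarrow> prob_space_subalgebra M F"
  by (intro prob_space_subalgebra.intro prob_space_axioms finite_measure_subalgebra_is_sigma_finite
      finite_measure_subalgebra.intro finite_measure_axioms finite_measure_subalgebra_axioms.intro)

section \<open>Conditional expectations\<close>

lemma (in sigma_finite_subalgebra) real_cond_exp_nested_cong:
  assumes "subalgebra M H" "subalgebra H F" "integrable M f"
    and "AE x in M. real_cond_exp M H f x = g x" "g \<in> borel_measurable M"
  shows "AE x in M. real_cond_exp M F f x = real_cond_exp M F g x"
proof -
  have "AE x in M. real_cond_exp M F f x = real_cond_exp M F (real_cond_exp M H f) x"
    using real_cond_exp_nested_subalg[OF assms(1-3)] by (auto elim: eventually_mono)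
  moreover have "AE x in M. real_cond_exp M F (real_cond_exp M H f) x = real_cond_exp M F g x"
    using assms(4,5) by (intro real_cond_exp_cong) simp_all
  ultimately show ?thesis
    by eventually_elim simp
qed

lemma (in prob_space) integral_mult_comp_eq_0:
  fixes w :: "'a \<Rightarrow> real" and U :: "'a \<Rightarrow> 'b"
  assumes w: "w \<in> borel_measurable M" "AE x in M. \<bar>w x\<bar> \<le> K"
    and U: "U \<in> measurable M N"
    and indicators: "\<And>A. A \<in> sets N \<Longrightarrow> (\<integral>x. w x * indicator A (U x) \<partial>M) = 0"
    and h: "integrable (distr M N U) h"
  shows "(\<integral>x. w x * h (U x) \<partial>M) = 0"
  using h
proof (induct rule: integrable_induct)
  case (base A c)
  then have "A \<in> sets N" by simp
  then show ?case
    using indicators[of A] by (simp add: mult.assoc[symmetric])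
next
  case (add f g)
  have "f \<in> borel_measurable N" "g \<in> borel_measurable N"
    using add by (auto dest: borel_measurable_integrable)
  then have "integrable M (\<lambda>x. f (U x))" "integrable M (\<lambda>x. g (U x))"
    using add(1,3) integrable_distr_eq[OF U] by blast+
  then have "integrable M (\<lambda>x. w x * f (U x))" "integrable M (\<lambda>x. w x * g (U x))"
    by (auto intro: integrable_bounded_mult[OF _ w])
  then show ?case
    using add by (simp add: distrib_left)
next
  case (lim f s)
  have [measurable]: "f \<in> borel_measurable N" "\<And>i. s i \<in> borel_measurable N"
    using lim by (auto dest: borel_measurable_integrable)
  have "(\<lambda>i. \<integral>x. w x * s i (U x) \<partial>M) \<longlonglongrightarrow> (\<integral>x. w x * f (U x) \<partial>M)"
  proof (rule integral_dominated_convergence[where w="\<lambda>x. K * (2 * \<bar>f (U x)\<bar>)"])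
    show "integrable M (\<lambda>x. K * (2 * \<bar>f (U x)\<bar>))"
      using lim by (simp add: integrable_distr_eq[OF U])
    show "AE x in M. (\<lambda>i. w x * s i (U x)) \<longlonglongrightarrow> w x * f (U x)"
      using lim(3) U by (auto intro!: AE_I2 tendsto_mult_left simp: measurable_space)
    show "AE x in M. norm (w x * s i (U x)) \<le> K * (2 * \<bar>f (U x)\<bar>)" for i
      using w(2) AE_space
    proof eventually_elim
      case (elim x)
      then have "\<bar>s i (U x)\<bar> \<le> 2 * \<bar>f (U x)\<bar>"
        using lim(4)[of "U x" i] U by (simp add: measurable_space)
      with elim show ?case
        by (simp add: abs_mult mult_mono')
    qed
  qed (use w U in measurable)
  then show ?case
    using lim(2) by (simp add: LIMSEQ_const_iff)
qed

context prob_space_subalgebra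
begin

lemma square_integrable_real_cond_exp:
  assumes f: "square_integrable M f"
  shows "square_integrable M (real_cond_exp M F f)"
proof -
  have [measurable]: "f \<in> borel_measurable M"
    using f by (rule square_integrable_measurable)
  have "integrable M (\<lambda>x. (real_cond_exp M F f x)\<^sup>2)"
  proof (rule integrable_convex_cond_exp[where I=UNIV and q=power2])
    show "integrable M f" "integrable M (\<lambda>x. (f x)\<^sup>2)"
      using f by (simp_all add: square_integrable_integrable square_integrable_def)
  qed (simp_all add: convex_power2)
  then show ?thesis by (simp add: square_integrable_def)
qed

lemma real_cond_exp_abs_le:
  assumes "integrable M f" "AE x in M. \<bar>f x\<bar> \<le> K"
  shows "AE x in M. \<bar>real_cond_exp M F f x\<bar> \<le> K"
proof -
  have "AE x in M. real_cond_exp M F f x \<le> K"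
    by (rule real_cond_exp_le_c[OF assms(1)]) (use assms(2) in \<open>auto elim: eventually_mono\<close>)
  moreover have "AE x in M. - K \<le> real_cond_exp M F f x"
    by (rule real_cond_exp_ge_c[OF assms(1)]) (use assms(2) in \<open>auto elim: eventually_mono\<close>)
  ultimately show ?thesis by eventually_elim auto
qed

lemma real_cond_exp_const:
  "AE x in M. real_cond_exp M F (\<lambda>_. a) x = a"
  by (intro real_cond_exp_F_meas) simp_all

lemma real_cond_exp_power2_add:
  assumes u: "square_integrable M u" and r: "square_integrable M r"
  shows "AE x in M. real_cond_exp M F (\<lambda>x. (u x + r x)\<^sup>2) x
    = real_cond_exp M F (\<lambda>x. (u x)\<^sup>2) x + 2 * real_cond_exp M F (\<lambda>x. u x * r x) x
      + real_cond_exp M F (\<lambda>x. (r x)\<^sup>2) x"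
proof -
  have uu: "integrable M (\<lambda>x. (u x)\<^sup>2)" and rr: "integrable M (\<lambda>x. (r x)\<^sup>2)"
    using u r by (simp_all add: square_integrable_def)
  have ur: "integrable M (\<lambda>x. u x * r x)"
    using u r by (rule square_integrable_mult_integrable)
  have "AE x in M. real_cond_exp M F (\<lambda>x. (u x + r x)\<^sup>2) x
      = real_cond_exp M F (\<lambda>x. ((u x)\<^sup>2 + 2 * (u x * r x)) + (r x)\<^sup>2) x"
    using u r by (intro real_cond_exp_cong) (auto simp: power2_sum)
  moreover have "AE x in M. real_cond_exp M F (\<lambda>x. ((u x)\<^sup>2 + 2 * (u x * r x)) + (r x)\<^sup>2) x
      = real_cond_exp M F (\<lambda>x. (u x)\<^sup>2 + 2 * (u x * r x)) x + real_cond_exp M F (\<lambda>x. (r x)\<^sup>2) x"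
    using uu ur rr by (intro real_cond_exp_add) auto
  moreover have "AE x in M. real_cond_exp M F (\<lambda>x. (u x)\<^sup>2 + 2 * (u x * r x)) x
      = real_cond_exp M F (\<lambda>x. (u x)\<^sup>2) x + real_cond_exp M F (\<lambda>x. 2 * (u x * r x)) x"
    using uu ur by (intro real_cond_exp_add) auto
  moreover have "AE x in M. real_cond_exp M F (\<lambda>x. 2 * (u x * r x)) x
      = 2 * real_cond_exp M F (\<lambda>x. u x * r x) x"
    using ur by (rule real_cond_exp_cmult)
  ultimately show ?thesis
    by eventually_elim simp
qed

lemma residual_indicator_orthogonal:
  fixes U :: "'a \<Rightarrow> 'b"
  assumes D: "D \<in> borel_measurable M" "AE x in M. \<bar>D x\<bar> \<le> 1"
    and U: "U \<in> measurable M N" and A: "A \<in> sets N" and S: "S \<in> sets F"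
    and factor: "AE x in M. real_cond_exp M F (\<lambda>x. indicator A (U x) * D x) x
        = real_cond_exp M F (\<lambda>x. indicator A (U x)) x * real_cond_exp M F D x"
  shows "(\<integral>x. indicator S x * (D x - real_cond_exp M F D x) * indicator A (U x) \<partial>M) = 0"
proof -
  define p where "p = real_cond_exp M F D"
  have [measurable]: "D \<in> borel_measurable M" "U \<in> measurable M N" "A \<in> sets N" "S \<in> sets M"
    "p \<in> borel_measurable M"
    using D U A S subalg unfolding p_def by (auto simp: subalgebra_def)
  have "AE x in M. \<bar>p x\<bar> \<le> 1"
    unfolding p_def using D by (intro real_cond_exp_abs_le integrable_const_bound[of _ 1]) auto
  then have int_pA: "integrable M (\<lambda>x. p x * indicator A (U x))"
    by (intro integrable_const_bound[where B=1]) (auto elim!: eventually_mono simp: indicator_def)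
  have int_AD: "integrable M (\<lambda>x. indicator A (U x) * D x)"
    using D(2) by (intro integrable_const_bound[where B=1]) (auto elim!: eventually_mono simp: indicator_def)
  let ?\<phi> = "\<lambda>x. (D x - p x) * indicator A (U x)"
  have "AE x in M. real_cond_exp M F ?\<phi> x
      = real_cond_exp M F (\<lambda>x. indicator A (U x) * D x - p x * indicator A (U x)) x"
    by (intro real_cond_exp_cong) (auto simp: algebra_simps)
  moreover have "AE x in M. real_cond_exp M F (\<lambda>x. indicator A (U x) * D x - p x * indicator A (U x)) x
      = real_cond_exp M F (\<lambda>x. indicator A (U x) * D x) x - real_cond_exp M F (\<lambda>x. p x * indicator A (U x)) x"
    using int_AD int_pA by (rule real_cond_exp_diff)
  moreover have "AE x in M. real_cond_exp M F (\<lambda>x. p x * indicator A (U x)) x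
      = p x * real_cond_exp M F (\<lambda>x. indicator A (U x)) x"
    using int_pA by (intro real_cond_exp_mult) (auto simp: p_def)
  ultimately have "AE x in M. real_cond_exp M F ?\<phi> x = 0"
    using factor unfolding p_def by eventually_elim simp
  then have "(\<integral>x\<in>S. real_cond_exp M F ?\<phi> x \<partial>M) = 0"
    unfolding set_lebesgue_integral_def by (intro integral_eq_zero_AE) (auto elim: eventually_mono)
  moreover have "(\<integral>x\<in>S. ?\<phi> x \<partial>M) = (\<integral>x\<in>S. real_cond_exp M F ?\<phi> x \<partial>M)"
    using int_AD int_pA S by (intro real_cond_exp_intA Bochner_Integration.integrable_diff)
      (auto simp: algebra_simps)
  ultimately show ?thesis
    by (simp add: set_lebesgue_integral_def mult.assoc p_def)
qed

text \<open>The residual \<open>D - E[D | F]\<close> is orthogonal to every \<open>1\<^sub>S \<cdot> 1\<^sub>A(U)\<close> with \<open>S \<in> F\<close>; by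
  integrable induction over the law of \<open>U\<close> it is orthogonal to \<open>1\<^sub>S \<cdot> g(U)\<close>.\<close>

lemma real_cond_exp_factorization_extend:
  fixes U :: "'a \<Rightarrow> 'b"
  assumes D: "D \<in> borel_measurable M" "AE x in M. \<bar>D x\<bar> \<le> 1"
    and U: "U \<in> measurable M N"
    and factor: "\<And>A. A \<in> sets N \<Longrightarrow> AE x in M.
      real_cond_exp M F (\<lambda>x. indicator A (U x) * D x) x
        = real_cond_exp M F (\<lambda>x. indicator A (U x)) x * real_cond_exp M F D x"
    and g: "g \<in> borel_measurable N" "integrable M (\<lambda>x. g (U x))"
  shows "AE x in M. real_cond_exp M F (\<lambda>x. D x * g (U x)) x
    = real_cond_exp M F D x * real_cond_exp M F (\<lambda>x. g (U x)) x"
proof -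
  define p where "p = real_cond_exp M F D"
  have [measurable]: "D \<in> borel_measurable M" "U \<in> measurable M N" "g \<in> borel_measurable N"
    "p \<in> borel_measurable M"
    using D U g unfolding p_def by simp_all
  have p_bound: "AE x in M. \<bar>p x\<bar> \<le> 1"
    unfolding p_def using D by (intro real_cond_exp_abs_le integrable_const_bound[of _ 1]) auto
  have int_pg: "integrable M (\<lambda>x. p x * g (U x))"
    by (rule integrable_bounded_mult[OF g(2) _ p_bound]) simp
  have "AE x in M. \<bar>D x - p x\<bar> \<le> 2"
    using D(2) p_bound by eventually_elim simp
  then have int_rg: "integrable M (\<lambda>x. (D x - p x) * g (U x))"
    by (rule integrable_bounded_mult[OF g(2), rotated]) simp
  have "AE x in M. real_cond_exp M F (\<lambda>x. (D x - p x) * g (U x)) x = 0"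
  proof (rule real_cond_exp_charact)
    fix S assume S: "S \<in> sets F"
    then have [measurable]: "S \<in> sets M"
      using subalg by (auto simp: subalgebra_def)
    have bound: "AE x in M. \<bar>indicator S x * (D x - p x)\<bar> \<le> 2"
      using D(2) p_bound by eventually_elim (auto simp: indicator_def)
    have orth: "(\<integral>x. indicator S x * (D x - p x) * indicator A (U x) \<partial>M) = 0" if "A \<in> sets N" for A
      unfolding p_def using residual_indicator_orthogonal[OF D U that S factor[OF that]] .
    have "integrable (distr M N U) g"
      using g by (simp add: integrable_distr_eq[OF U])
    from integral_mult_comp_eq_0[OF _ bound U orth this]
    have "(\<integral>x. indicator S x * (D x - p x) * g (U x) \<partial>M) = 0"
      by measurable
    then show "(\<integral>x\<in>S. (D x - p x) * g (U x) \<partial>M) = (\<integral>x\<in>S. 0 \<partial>M)"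
      by (simp add: set_lebesgue_integral_def mult.assoc)
  qed (use int_rg in simp_all)
  moreover have "AE x in M. real_cond_exp M F (\<lambda>x. D x * g (U x)) x
      = real_cond_exp M F (\<lambda>x. p x * g (U x) + (D x - p x) * g (U x)) x"
    by (intro real_cond_exp_cong) (auto simp: algebra_simps)
  moreover have "AE x in M. real_cond_exp M F (\<lambda>x. p x * g (U x) + (D x - p x) * g (U x)) x
      = real_cond_exp M F (\<lambda>x. p x * g (U x)) x + real_cond_exp M F (\<lambda>x. (D x - p x) * g (U x)) x"
    using int_pg int_rg by (rule real_cond_exp_add)
  moreover have "AE x in M. real_cond_exp M F (\<lambda>x. p x * g (U x)) x = p x * real_cond_exp M F (\<lambda>x. g (U x)) x"
    using int_pg by (intro real_cond_exp_mult) (simp_all add: p_def)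
  ultimately show ?thesis
    unfolding p_def by eventually_elim simp
qed

lemma real_cond_exp_uncorrelated_complement:
  assumes G: "G \<in> borel_measurable M" "AE x in M. \<bar>G x\<bar> \<le> 1" and Y: "square_integrable M Y"
    and uncorr: "AE x in M. real_cond_exp M F (\<lambda>x. G x * Y x) x
      = real_cond_exp M F G x * real_cond_exp M F Y x"
  shows "AE x in M. real_cond_exp M F (\<lambda>x. (1 - G x) * Y x) x
    = real_cond_exp M F (\<lambda>x. 1 - G x) x * real_cond_exp M F Y x"
proof -
  have intY: "integrable M Y"
    using Y by (rule square_integrable_integrable)
  have intG: "integrable M G"
    using G by (intro integrable_const_bound[where B=1]) auto
  have intGY: "integrable M (\<lambda>x. G x * Y x)"
    using intY G by (rule integrable_bounded_mult)
  have "AE x in M. real_cond_exp M F (\<lambda>x. (1 - G x) * Y x) x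
      = real_cond_exp M F (\<lambda>x. Y x - G x * Y x) x"
    using Y G by (intro real_cond_exp_cong) (auto simp: algebra_simps)
  moreover have "AE x in M. real_cond_exp M F (\<lambda>x. Y x - G x * Y x) x
      = real_cond_exp M F Y x - real_cond_exp M F (\<lambda>x. G x * Y x) x"
    using intY intGY by (rule real_cond_exp_diff)
  moreover have "AE x in M. real_cond_exp M F (\<lambda>x. 1 - G x) x
      = real_cond_exp M F (\<lambda>_. 1) x - real_cond_exp M F G x"
    using intG by (intro real_cond_exp_diff) simp_all
  moreover note real_cond_exp_const[of 1]
  ultimately show ?thesis
    using uncorr by eventually_elim (simp only:, simp add: algebra_simps)
qed

lemma real_cond_exp_weighted_residual:
  assumes G: "G \<in> borel_measurable M" "AE x in M. \<bar>G x\<bar> \<le> 1" and Y: "square_integrable M Y"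
    and uncorr: "AE x in M. real_cond_exp M F (\<lambda>x. G x * Y x) x
      = real_cond_exp M F G x * real_cond_exp M F Y x"
    and w: "w \<in> borel_measurable F" "AE x in M. \<bar>w x\<bar> \<le> K"
  shows "AE x in M. real_cond_exp M F (\<lambda>x. w x * (G x * (Y x - real_cond_exp M F Y x))) x = 0"
proof -
  define b where "b = real_cond_exp M F Y"
  have [measurable]: "b \<in> borel_measurable F" "b \<in> borel_measurable M"
    "w \<in> borel_measurable M" "G \<in> borel_measurable M" "Y \<in> borel_measurable M"
    using w G Y unfolding b_def by (auto intro: measurable_from_subalg[OF subalg])
  have b: "square_integrable M b"
    unfolding b_def using Y by (rule square_integrable_real_cond_exp)
  have GY: "square_integrable M (\<lambda>x. G x * Y x)" and bG: "square_integrable M (\<lambda>x. G x * b x)"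
    using Y b G by (auto intro: square_integrable_bounded_mult)
  have res: "square_integrable M (\<lambda>x. G x * (Y x - b x))"
    using square_integrable_diff[OF GY bG] by (simp add: algebra_simps)
  have "AE x in M. real_cond_exp M F (\<lambda>x. w x * (G x * (Y x - b x))) x
      = w x * real_cond_exp M F (\<lambda>x. G x * (Y x - b x)) x"
    using square_integrable_bounded_mult[OF res _ w(2)]
    by (intro real_cond_exp_mult) (simp_all add: w(1) square_integrable_integrable)
  moreover have "AE x in M. real_cond_exp M F (\<lambda>x. G x * (Y x - b x)) x
      = real_cond_exp M F (\<lambda>x. G x * Y x - b x * G x) x"
    by (intro real_cond_exp_cong) (auto simp: algebra_simps)
  moreover have "AE x in M. real_cond_exp M F (\<lambda>x. G x * Y x - b x * G x) x
      = real_cond_exp M F (\<lambda>x. G x * Y x) x - real_cond_exp M F (\<lambda>x. b x * G x) x"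
    using GY bG by (intro real_cond_exp_diff) (simp_all add: square_integrable_integrable mult.commute)
  moreover have "AE x in M. real_cond_exp M F (\<lambda>x. b x * G x) x = b x * real_cond_exp M F G x"
    using bG by (intro real_cond_exp_mult) (simp_all add: square_integrable_integrable mult.commute)
  ultimately show ?thesis
    using uncorr unfolding b_def by eventually_elim simp
qed

lemma real_cond_exp_mult_centered:
  assumes D: "D \<in> borel_measurable M" "AE x in M. \<bar>D x\<bar> \<le> 1"
    and q: "q \<in> borel_measurable F" "AE x in M. real_cond_exp M F D x = q x"
    and c: "c \<in> borel_measurable F" "square_integrable M c"
  shows "AE x in M. real_cond_exp M F (\<lambda>x. c x * (D x - q x)) x = 0"
proof -
  have [measurable]: "q \<in> borel_measurable M" "c \<in> borel_measurable M" "D \<in> borel_measurable M"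
    using q c D by (auto intro: measurable_from_subalg[OF subalg])
  have intD: "integrable M D"
    using D by (intro integrable_const_bound[where B=1]) auto
  have "AE x in M. \<bar>real_cond_exp M F D x\<bar> \<le> 1"
    using intD D(2) by (rule real_cond_exp_abs_le)
  then have "AE x in M. \<bar>q x\<bar> \<le> 1"
    using q(2) by eventually_elim simp
  then have intq: "integrable M q"
    by (intro integrable_const_bound[where B=1]) auto
  have "AE x in M. \<bar>D x - q x\<bar> \<le> 2"
    using D(2) \<open>AE x in M. \<bar>q x\<bar> \<le> 1\<close> by eventually_elim simp
  then have "square_integrable M (\<lambda>x. (D x - q x) * c x)"
    using c(2) by (intro square_integrable_bounded_mult) auto
  then have "AE x in M. real_cond_exp M F (\<lambda>x. c x * (D x - q x)) x
      = c x * real_cond_exp M F (\<lambda>x. D x - q x) x"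
    by (intro real_cond_exp_mult) (simp_all add: c(1) square_integrable_integrable mult.commute)
  moreover have "AE x in M. real_cond_exp M F (\<lambda>x. D x - q x) x
      = real_cond_exp M F D x - real_cond_exp M F q x"
    using intD intq by (rule real_cond_exp_diff)
  moreover have "AE x in M. real_cond_exp M F q x = q x"
    using intq q(1) by (rule real_cond_exp_F_meas)
  ultimately show ?thesis
    using q(2) by eventually_elim simp
qed

lemma real_cond_exp_binary_variance:
  assumes D: "D \<in> borel_measurable M" "\<And>x. x \<in> space M \<Longrightarrow> D x = 0 \<or> D x = 1"
    and q: "q \<in> borel_measurable F" "AE x in M. real_cond_exp M F D x = q x"
  shows "AE x in M. real_cond_exp M F (\<lambda>x. (D x - q x)\<^sup>2) x = q x * (1 - q x)"
proof -
  have [measurable]: "q \<in> borel_measurable M"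
    using q(1) by (rule measurable_from_subalg[OF subalg])
  have D_bound: "AE x in M. \<bar>D x\<bar> \<le> 1"
    using D(2) by (intro AE_I2) force
  have intD: "integrable M D"
    using D(1) D_bound by (intro integrable_const_bound[where B=1]) auto
  have "AE x in M. \<bar>real_cond_exp M F D x\<bar> \<le> 1"
    using intD D_bound by (rule real_cond_exp_abs_le)
  then have q_bound: "AE x in M. \<bar>q x\<bar> \<le> 1"
    using q(2) by eventually_elim simp
  then have int1: "integrable M (\<lambda>x. (1 - 2 * q x) * D x)"
    using intD by (intro integrable_bounded_mult[where K=3]) (auto elim!: eventually_mono)
  have int2: "integrable M (\<lambda>x. (q x)\<^sup>2)"
    using q_bound by (intro integrable_const_bound[where B=1]) (auto elim!: eventually_mono
        simp: abs_square_le_1)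
  have "AE x in M. real_cond_exp M F (\<lambda>x. (D x - q x)\<^sup>2) x
      = real_cond_exp M F (\<lambda>x. (1 - 2 * q x) * D x + (q x)\<^sup>2) x"
    using D by (intro real_cond_exp_cong AE_I2) (auto simp: power2_eq_square algebra_simps)
  moreover have "AE x in M. real_cond_exp M F (\<lambda>x. (1 - 2 * q x) * D x + (q x)\<^sup>2) x
      = real_cond_exp M F (\<lambda>x. (1 - 2 * q x) * D x) x + real_cond_exp M F (\<lambda>x. (q x)\<^sup>2) x"
    using int1 int2 by (rule real_cond_exp_add)
  moreover have "(\<lambda>x. 1 - 2 * q x) \<in> borel_measurable F"
    using q(1) by measurable
  then have "AE x in M. real_cond_exp M F (\<lambda>x. (1 - 2 * q x) * D x) x
      = (1 - 2 * q x) * real_cond_exp M F D x"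
    using D(1) int1 by (rule real_cond_exp_mult)
  moreover have "(\<lambda>x. (q x)\<^sup>2) \<in> borel_measurable F"
    using q(1) by measurable
  with int2 have "AE x in M. real_cond_exp M F (\<lambda>x. (q x)\<^sup>2) x = (q x)\<^sup>2"
    by (rule real_cond_exp_F_meas)
  ultimately show ?thesis
    using q(2) by eventually_elim (simp add: power2_eq_square algebra_simps)
qed

end

context prob_space
begin

lemma square_integrable_condE:
  assumes "W \<in> borel_measurable M" "square_integrable M f"
  shows "square_integrable M (condE M W f)"
proof -
  interpret prob_space_subalgebra M "sigma_gen M W"
    using assms(1) by (intro prob_space_subalgebraI subalgebra_vimage_algebra)
  show ?thesis
    unfolding condE_def using assms(2) by (rule square_integrable_real_cond_exp)
qed

lemma cond_indep_binary_factorization: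
  fixes U :: "'a \<Rightarrow> 'u::topological_space"
  assumes indep: "cond_indep M U D W" and W: "W \<in> borel_measurable M" and U: "U \<in> borel_measurable M"
    and D: "D \<in> borel_measurable M" "\<And>x. x \<in> space M \<Longrightarrow> D x = 0 \<or> D x = 1"
    and g: "g \<in> borel_measurable borel" "integrable M (\<lambda>x. g (U x))"
  shows "AE x in M. condE M W (\<lambda>x. D x * g (U x)) x = condE M W D x * condE M W (\<lambda>x. g (U x)) x"
proof -
  interpret prob_space_subalgebra M "sigma_gen M W"
    using W by (intro prob_space_subalgebraI subalgebra_vimage_algebra)
  have D_indicator: "x \<in> space M \<Longrightarrow> indicator {1} (D x) = D x" for x
    using D(2)[of x] by auto
  show ?thesis
    unfolding condE_def
  proof (rule real_cond_exp_factorization_extend[OF D(1) _ U _ g])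
    show "AE x in M. \<bar>D x\<bar> \<le> 1"
      using D(2) by (intro AE_I2) force
    fix A :: "'u set" assume "A \<in> sets borel"
    then have "AE x in M. real_cond_exp M (sigma_gen M W) (\<lambda>x. indicator A (U x) * indicator {1} (D x)) x
        = real_cond_exp M (sigma_gen M W) (\<lambda>x. indicator A (U x)) x
          * real_cond_exp M (sigma_gen M W) (\<lambda>x. indicator {1} (D x)) x"
      using indep closed_singleton[of "1::real", THEN borel_closed] unfolding cond_indep_def condE_def
      by blast
    moreover have "AE x in M. real_cond_exp M (sigma_gen M W) (\<lambda>x. indicator A (U x) * indicator {1} (D x)) x
        = real_cond_exp M (sigma_gen M W) (\<lambda>x. indicator A (U x) * D x) x"
      using \<open>A \<in> sets borel\<close> U D by (intro real_cond_exp_cong) (auto simp: D_indicator)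
    moreover have "AE x in M. real_cond_exp M (sigma_gen M W) (\<lambda>x. indicator {1} (D x)) x
        = real_cond_exp M (sigma_gen M W) D x"
      using D by (intro real_cond_exp_cong) (auto simp: D_indicator)
    ultimately show "AE x in M. real_cond_exp M (sigma_gen M W) (\<lambda>x. indicator A (U x) * D x) x
        = real_cond_exp M (sigma_gen M W) (\<lambda>x. indicator A (U x)) x * real_cond_exp M (sigma_gen M W) D x"
      by eventually_elim simp
  qed
qed

lemma sig2_cong:
  assumes Z: "Z \<in> borel_measurable M" and g: "g \<in> borel_measurable M" "g' \<in> borel_measurable M"
    and eq: "AE x in M. g x = g' x"
  shows "AE x in M. sig2 M Z Y1 Y0 g x = sig2 M Z Y1 Y0 g' x"
proof -
  interpret prob_space_subalgebra M "sigma_gen M Z"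
    using Z by (intro prob_space_subalgebraI subalgebra_vimage_algebra)
  show ?thesis
    unfolding sig2_def condE_def using eq g by (intro real_cond_exp_cong) (auto elim: eventually_mono)
qed

end

section \<open>Augmented inverse-propensity scores\<close>

lemma psi_eq_psistar: "psi p d y = psistar p 0 0 d y"
  by (simp add: psi_def psistar_def)

lemma psistar_change_regression:
  fixes q :: real
  assumes "q \<noteq> 0" "q \<noteq> 1"
  shows "psistar q a1 a0 d y = psistar q b1 b0 d y + (d - q) * ((b1 - a1) / q + (b0 - a0) / (1 - q))"
  using assms unfolding psistar_def by (simp add: divide_simps) algebra

lemma psistar_residual:
  fixes q :: real
  assumes "d = 0 \<or> d = 1" "q \<noteq> 0" "q \<noteq> 1"
  shows "(d - q) * (psistar q b1 b0 d (d * y1 + (1 - d) * y0) - t)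
    = (1 - q) / q * (d * (y1 - b1)) + q / (1 - q) * ((1 - d) * (y0 - b0)) + (b1 - b0 - t) * (d - q)"
proof -
  have "1 - q \<noteq> 0" using assms(3) by simp
  with assms(1,2) show ?thesis
    unfolding psistar_def by (auto simp: field_simps)
qed

lemma overlap_weights_bounded:
  fixes c q :: real
  assumes "c > 0" "c < q" "q < 1 - c"
  shows "\<bar>(1 - q) / q\<bar> \<le> 1 / c \<and> \<bar>q / (1 - q)\<bar> \<le> 1 / c"
proof -
  from assms have "0 < q" "0 < 1 - q" by auto
  moreover have "(1 - q) / q \<le> 1 / c" "q / (1 - q) \<le> 1 / c"
    using assms by (intro frac_le; simp)+
  ultimately show ?thesis by simp
qed

locale propensity_score = prob_space_subalgebra M F for M F :: "'a measure" +
  fixes D Y1 Y0 q :: "'a \<Rightarrow> real" and c :: real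
  assumes D_measurable [measurable]: "D \<in> borel_measurable M"
    and binary: "\<And>x. x \<in> space M \<Longrightarrow> D x = 0 \<or> D x = 1"
    and Y1: "square_integrable M Y1" and Y0: "square_integrable M Y0"
    and q_measurable: "q \<in> borel_measurable F"
    and overlap: "c > 0" "AE x in M. c < q x \<and> q x < 1 - c"
    and ED: "AE x in M. real_cond_exp M F D x = q x"
    and EDY1: "AE x in M. real_cond_exp M F (\<lambda>x. D x * Y1 x) x = q x * real_cond_exp M F Y1 x"
    and EDY0: "AE x in M. real_cond_exp M F (\<lambda>x. D x * Y0 x) x = q x * real_cond_exp M F Y0 x"
begin

abbreviation "b1 \<equiv> real_cond_exp M F Y1"
abbreviation "b0 \<equiv> real_cond_exp M F Y0"

lemma measurable_q_Y [measurable]: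
  "q \<in> borel_measurable M" "Y1 \<in> borel_measurable M" "Y0 \<in> borel_measurable M"
  using q_measurable Y1 Y0 by (auto intro: measurable_from_subalg[OF subalg])

lemma treatment_bounds:
  "AE x in M. \<bar>D x\<bar> \<le> 1" "AE x in M. \<bar>1 - D x\<bar> \<le> 1" "AE x in M. \<bar>D x - q x\<bar> \<le> 1"
  using overlap(2) AE_space by (eventually_elim, use binary overlap(1) in force)+

lemma propensity_bound: "AE x in M. \<bar>q x\<bar> \<le> 1"
  using overlap(2) by eventually_elim (use overlap(1) in auto)

lemma integrable_D_q: "integrable M D" "integrable M q"
  by (rule integrable_const_bound[where B=1], use treatment_bounds(1) propensity_bound in simp_all)+

lemma square_integrable_b: "square_integrable M b1" "square_integrable M b0"
  using Y1 Y0 by (auto intro: square_integrable_real_cond_exp)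

lemma square_integrable_psistar_b:
  "square_integrable M (\<lambda>x. psistar (q x) (b1 x) (b0 x) (D x) (Yobs D Y1 Y0 x))"
  using square_integrable_Yobs[OF D_measurable treatment_bounds(1) Y1 Y0]
  by (intro square_integrable_psistar[OF square_integrable_b _ D_measurable treatment_bounds(1) _ overlap])
    simp_all

lemma inverse_weights_measurable:
  "(\<lambda>x. (1 - q x) / q x) \<in> borel_measurable F" "(\<lambda>x. q x / (1 - q x)) \<in> borel_measurable F"
  using q_measurable by (intro borel_measurable_divide borel_measurable_diff borel_measurable_const; simp)+

lemma inverse_weights_bounded:
  "AE x in M. \<bar>(1 - q x) / q x\<bar> \<le> 1 / c" "AE x in M. \<bar>q x / (1 - q x)\<bar> \<le> 1 / c"
proof -
  have "AE x in M. \<bar>(1 - q x) / q x\<bar> \<le> 1 / c \<and> \<bar>q x / (1 - q x)\<bar> \<le> 1 / c"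
    using overlap(2) by eventually_elim (rule overlap_weights_bounded[OF overlap(1)]; simp)
  then show "AE x in M. \<bar>(1 - q x) / q x\<bar> \<le> 1 / c" "AE x in M. \<bar>q x / (1 - q x)\<bar> \<le> 1 / c"
    by (auto elim: eventually_mono)
qed

lemma treated_residual:
  "square_integrable M (\<lambda>x. (1 - q x) / q x * (D x * (Y1 x - b1 x)))"
  "AE x in M. real_cond_exp M F (\<lambda>x. (1 - q x) / q x * (D x * (Y1 x - b1 x))) x = 0"
proof -
  have "square_integrable M (\<lambda>x. D x * (Y1 x - b1 x))"
    using Y1 square_integrable_b treatment_bounds(1)
    by (intro square_integrable_bounded_mult square_integrable_diff) simp_all
  then show "square_integrable M (\<lambda>x. (1 - q x) / q x * (D x * (Y1 x - b1 x)))"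
    by (rule square_integrable_bounded_mult[OF _ _ inverse_weights_bounded(1)]) simp
  have "AE x in M. real_cond_exp M F (\<lambda>x. D x * Y1 x) x = real_cond_exp M F D x * b1 x"
    using EDY1 ED by eventually_elim simp
  then show "AE x in M. real_cond_exp M F (\<lambda>x. (1 - q x) / q x * (D x * (Y1 x - b1 x))) x = 0"
    by (rule real_cond_exp_weighted_residual[OF D_measurable treatment_bounds(1) Y1 _
          inverse_weights_measurable(1) inverse_weights_bounded(1)])
qed

lemma control_residual:
  "square_integrable M (\<lambda>x. q x / (1 - q x) * ((1 - D x) * (Y0 x - b0 x)))"
  "AE x in M. real_cond_exp M F (\<lambda>x. q x / (1 - q x) * ((1 - D x) * (Y0 x - b0 x))) x = 0"
proof -
  have "square_integrable M (\<lambda>x. (1 - D x) * (Y0 x - b0 x))"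
    using Y0 square_integrable_b treatment_bounds(2)
    by (intro square_integrable_bounded_mult square_integrable_diff) simp_all
  then show "square_integrable M (\<lambda>x. q x / (1 - q x) * ((1 - D x) * (Y0 x - b0 x)))"
    by (rule square_integrable_bounded_mult[OF _ _ inverse_weights_bounded(2)]) simp
  have "AE x in M. real_cond_exp M F (\<lambda>x. D x * Y0 x) x = real_cond_exp M F D x * b0 x"
    using EDY0 ED by eventually_elim simp
  then have uncorr: "AE x in M. real_cond_exp M F (\<lambda>x. (1 - D x) * Y0 x) x
      = real_cond_exp M F (\<lambda>x. 1 - D x) x * b0 x"
    by (rule real_cond_exp_uncorrelated_complement[OF D_measurable treatment_bounds(1) Y0])
  show "AE x in M. real_cond_exp M F (\<lambda>x. q x / (1 - q x) * ((1 - D x) * (Y0 x - b0 x))) x = 0"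
    by (rule real_cond_exp_weighted_residual[OF _ treatment_bounds(2) Y0 uncorr
          inverse_weights_measurable(2) inverse_weights_bounded(2)]) simp
qed

lemma real_cond_exp_psistar_residual:
  assumes \<tau>: "\<tau> \<in> borel_measurable F" "square_integrable M \<tau>"
  shows "AE x in M. real_cond_exp M F (\<lambda>x. (D x - q x) *
      (psistar (q x) (b1 x) (b0 x) (D x) (Yobs D Y1 Y0 x) - \<tau> x)) x = 0"
proof -
  define T1 where "T1 x = (1 - q x) / q x * (D x * (Y1 x - b1 x))" for x
  define T0 where "T0 x = q x / (1 - q x) * ((1 - D x) * (Y0 x - b0 x))" for x
  define T where "T x = (b1 x - b0 x - \<tau> x) * (D x - q x)" for x
  have [measurable]: "\<tau> \<in> borel_measurable M"
    using \<tau>(1) by (rule measurable_from_subalg[OF subalg])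
  have \<tau>_gap_F: "(\<lambda>x. b1 x - b0 x - \<tau> x) \<in> borel_measurable F"
    using \<tau>(1) by (intro borel_measurable_diff borel_measurable_cond_exp)
  have \<tau>_gap: "square_integrable M (\<lambda>x. b1 x - b0 x - \<tau> x)"
    using square_integrable_b \<tau>(2) by (intro square_integrable_diff)
  then have "square_integrable M (\<lambda>x. (D x - q x) * (b1 x - b0 x - \<tau> x))"
    using treatment_bounds(3) by (intro square_integrable_bounded_mult) simp_all
  then have int: "integrable M T1" "integrable M T0" "integrable M T"
    unfolding T1_def T0_def T_def
    using square_integrable_integrable[OF treated_residual(1)] square_integrable_integrable[OF control_residual(1)]
    by (simp_all add: square_integrable_integrable mult.commute)
  have "AE x in M. (D x - q x) * (psistar (q x) (b1 x) (b0 x) (D x) (Yobs D Y1 Y0 x) - \<tau> x)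
      = (T1 x + T0 x) + T x"
    using overlap(2) AE_space
  proof eventually_elim
    case (elim x)
    then show ?case
      unfolding T1_def T0_def T_def Yobs_def using binary[of x] overlap(1)
      by (intro psistar_residual) auto
  qed
  then have "AE x in M. real_cond_exp M F (\<lambda>x. (D x - q x) *
      (psistar (q x) (b1 x) (b0 x) (D x) (Yobs D Y1 Y0 x) - \<tau> x)) x
      = real_cond_exp M F (\<lambda>x. (T1 x + T0 x) + T x) x"
    by (rule real_cond_exp_cong) (unfold T1_def T0_def T_def Yobs_def psistar_def, measurable)
  moreover have "AE x in M. real_cond_exp M F (\<lambda>x. (T1 x + T0 x) + T x) x
      = real_cond_exp M F T1 x + real_cond_exp M F T0 x + real_cond_exp M F T x"
    using real_cond_exp_add[OF Bochner_Integration.integrable_add[OF int(1,2)] int(3)]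
      real_cond_exp_add[OF int(1,2)] by eventually_elim simp
  moreover have "AE x in M. real_cond_exp M F T x = 0"
    unfolding T_def using \<tau>_gap_F \<tau>_gap
    by (rule real_cond_exp_mult_centered[OF D_measurable treatment_bounds(1) q_measurable ED])
  ultimately show ?thesis
    using treated_residual(2) control_residual(2) unfolding T1_def T0_def by eventually_elim simp
qed

lemma real_cond_exp_cross_term:
  assumes h: "h \<in> borel_measurable F" "square_integrable M h"
    and \<tau>: "\<tau> \<in> borel_measurable F" "square_integrable M \<tau>"
  shows "AE x in M. real_cond_exp M F (\<lambda>x. ((D x - q x) * h x) *
      (psistar (q x) (b1 x) (b0 x) (D x) (Yobs D Y1 Y0 x) - \<tau> x)) x = 0"
proof -
  define u where "u x = psistar (q x) (b1 x) (b0 x) (D x) (Yobs D Y1 Y0 x) - \<tau> x" for x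
  have u: "square_integrable M u"
    unfolding u_def using square_integrable_psistar_b \<tau>(2) by (rule square_integrable_diff)
  have [measurable]: "u \<in> borel_measurable M" "h \<in> borel_measurable M"
    using u h by (auto intro: measurable_from_subalg[OF subalg])
  have "square_integrable M (\<lambda>x. (D x - q x) * h x)"
    using h(2) treatment_bounds(3) by (intro square_integrable_bounded_mult) simp_all
  from square_integrable_mult_integrable[OF this u]
  have "integrable M (\<lambda>x. h x * ((D x - q x) * u x))"
    by (simp add: mult_ac)
  then have "AE x in M. real_cond_exp M F (\<lambda>x. h x * ((D x - q x) * u x)) x
      = h x * real_cond_exp M F (\<lambda>x. (D x - q x) * u x) x"
    by (intro real_cond_exp_mult h(1)) simp_all
  with real_cond_exp_psistar_residual[OF \<tau>] show ?thesis
    unfolding u_def by eventually_elim (simp add: mult_ac)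
qed

lemma real_cond_exp_square_term:
  assumes h: "h \<in> borel_measurable F" "square_integrable M h"
  shows "AE x in M. real_cond_exp M F (\<lambda>x. ((D x - q x) * h x)\<^sup>2) x = q x * (1 - q x) * (h x)\<^sup>2"
proof -
  have [measurable]: "h \<in> borel_measurable M"
    using h(2) by (rule square_integrable_measurable)
  have "square_integrable M (\<lambda>x. (D x - q x) * h x)"
    using h(2) treatment_bounds(3) by (intro square_integrable_bounded_mult) simp_all
  then have "integrable M (\<lambda>x. (h x)\<^sup>2 * (D x - q x)\<^sup>2)"
    by (simp add: square_integrable_def power_mult_distrib mult_ac)
  moreover have "(\<lambda>x. (h x)\<^sup>2) \<in> borel_measurable F"
    using h(1) by measurable
  ultimately have "AE x in M. real_cond_exp M F (\<lambda>x. (h x)\<^sup>2 * (D x - q x)\<^sup>2) x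
      = (h x)\<^sup>2 * real_cond_exp M F (\<lambda>x. (D x - q x)\<^sup>2) x"
    by (intro real_cond_exp_mult) simp_all
  moreover have "AE x in M. real_cond_exp M F (\<lambda>x. (D x - q x)\<^sup>2) x = q x * (1 - q x)"
    by (rule real_cond_exp_binary_variance[OF D_measurable _ q_measurable ED]) (rule binary)
  ultimately show ?thesis
    by eventually_elim (simp add: power_mult_distrib mult_ac)
qed

lemma coarser_propensity:
  assumes G: "subalgebra F G" "q \<in> borel_measurable G"
  shows "AE x in M. real_cond_exp M G D x = q x"
proof -
  interpret G: prob_space_subalgebra M G
    using subalg G(1) by (intro prob_space_subalgebraI) (auto simp: subalgebra_def)
  have "AE x in M. real_cond_exp M G D x = real_cond_exp M G q x"
    using subalg G(1) integrable_D_q(1) ED by (rule G.real_cond_exp_nested_cong) simp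
  moreover have "AE x in M. real_cond_exp M G q x = q x"
    using integrable_D_q(2) G(2) by (rule G.real_cond_exp_F_meas)
  ultimately show ?thesis
    by eventually_elim simp
qed

lemma coarser_uncorrelated:
  assumes G: "subalgebra F G" "q \<in> borel_measurable G"
    and Y: "square_integrable M Y" "AE x in M. real_cond_exp M F (\<lambda>x. D x * Y x) x = q x * real_cond_exp M F Y x"
  shows "AE x in M. real_cond_exp M G (\<lambda>x. D x * Y x) x = q x * real_cond_exp M G Y x"
proof -
  interpret G: prob_space_subalgebra M G
    using subalg G(1) by (intro prob_space_subalgebraI) (auto simp: subalgebra_def)
  have [measurable]: "Y \<in> borel_measurable M"
    using Y(1) by (rule square_integrable_measurable)
  have "integrable M (\<lambda>x. D x * Y x)"
    using Y(1) treatment_bounds(1) by (intro square_integrable_integrable square_integrable_bounded_mult) simp_all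
  then have "AE x in M. real_cond_exp M G (\<lambda>x. D x * Y x) x
      = real_cond_exp M G (\<lambda>x. q x * real_cond_exp M F Y x) x"
    using subalg G(1) Y(2) by (intro G.real_cond_exp_nested_cong) simp_all
  moreover have "AE x in M. real_cond_exp M G (\<lambda>x. q x * real_cond_exp M F Y x) x
      = q x * real_cond_exp M G (real_cond_exp M F Y) x"
    using G(2) square_integrable_real_cond_exp[OF Y(1)] propensity_bound
    by (intro G.real_cond_exp_mult square_integrable_integrable square_integrable_bounded_mult) simp_all
  moreover have "AE x in M. real_cond_exp M G (real_cond_exp M F Y) x = real_cond_exp M G Y x"
    using subalg G(1) Y(1) by (intro G.real_cond_exp_nested_subalg square_integrable_integrable)
  ultimately show ?thesis
    by eventually_elim simp
qed

lemma propensity_score_coarsen: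
  assumes "subalgebra F G" "q \<in> borel_measurable G"
  shows "propensity_score M G D Y1 Y0 q c"
proof (intro propensity_score.intro propensity_score_axioms.intro)
  show "prob_space_subalgebra M G"
    using subalg assms(1) by (intro prob_space_subalgebraI) (auto simp: subalgebra_def)
  show "AE x in M. real_cond_exp M G D x = q x"
    by (rule coarser_propensity[OF assms])
  show "AE x in M. real_cond_exp M G (\<lambda>x. D x * Y1 x) x = q x * real_cond_exp M G Y1 x"
    by (rule coarser_uncorrelated[OF assms Y1 EDY1])
  show "AE x in M. real_cond_exp M G (\<lambda>x. D x * Y0 x) x = q x * real_cond_exp M G Y0 x"
    by (rule coarser_uncorrelated[OF assms Y0 EDY0])
qed (use assms binary Y1 Y0 overlap in auto)

lemma adjustment_gap:
  assumes "a1 \<in> borel_measurable F" "a0 \<in> borel_measurable F" "square_integrable M a1" "square_integrable M a0"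
  shows "(\<lambda>x. (b1 x - a1 x) / q x + (b0 x - a0 x) / (1 - q x)) \<in> borel_measurable F"
    and "square_integrable M (\<lambda>x. (b1 x - a1 x) / q x + (b0 x - a0 x) / (1 - q x))"
proof -
  show "(\<lambda>x. (b1 x - a1 x) / q x + (b0 x - a0 x) / (1 - q x)) \<in> borel_measurable F"
    using q_measurable assms(1,2) by measurable
  show "square_integrable M (\<lambda>x. (b1 x - a1 x) / q x + (b0 x - a0 x) / (1 - q x))"
    using square_integrable_b assms(3,4)
    by (intro square_integrable_add square_integrable_divide_overlap[OF _ _ overlap] square_integrable_diff)
      (auto intro: measurable_from_subalg[OF subalg] q_measurable)
qed

lemma real_cond_exp_psistar_decomposition:
  assumes G: "subalgebra F G"
    and a: "a1 \<in> borel_measurable F" "a0 \<in> borel_measurable F" "square_integrable M a1" "square_integrable M a0"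
    and \<tau>: "\<tau> \<in> borel_measurable G" "square_integrable M \<tau>"
  shows "AE x in M. real_cond_exp M G (\<lambda>x. (psistar (q x) (a1 x) (a0 x) (D x) (Yobs D Y1 Y0 x) - \<tau> x)\<^sup>2) x
    = real_cond_exp M G (\<lambda>x. (psistar (q x) (b1 x) (b0 x) (D x) (Yobs D Y1 Y0 x) - \<tau> x)\<^sup>2) x
      + real_cond_exp M G (\<lambda>x. q x * (1 - q x) * ((b1 x - a1 x) / q x + (b0 x - a0 x) / (1 - q x))\<^sup>2) x"
proof -
  interpret G: prob_space_subalgebra M G
    using subalg G by (intro prob_space_subalgebraI) (auto simp: subalgebra_def)
  define u where "u x = psistar (q x) (b1 x) (b0 x) (D x) (Yobs D Y1 Y0 x) - \<tau> x" for x
  define h where "h x = (b1 x - a1 x) / q x + (b0 x - a0 x) / (1 - q x)" for x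
  define r where "r x = (D x - q x) * h x" for x
  have \<tau>_F: "\<tau> \<in> borel_measurable F"
    using \<tau>(1) by (rule measurable_from_subalg[OF G])
  have h_F: "h \<in> borel_measurable F" and h: "square_integrable M h"
    unfolding h_def using adjustment_gap[OF a] by simp_all
  have u: "square_integrable M u"
    unfolding u_def using square_integrable_psistar_b \<tau>(2) by (rule square_integrable_diff)
  have r: "square_integrable M r"
    unfolding r_def using h treatment_bounds(3) by (intro square_integrable_bounded_mult) simp_all
  have [measurable]: "u \<in> borel_measurable M" "r \<in> borel_measurable M" "\<tau> \<in> borel_measurable M"
    "a1 \<in> borel_measurable M" "a0 \<in> borel_measurable M" "h \<in> borel_measurable M"
    using u r \<tau>_F a(1,2) h by (auto intro: measurable_from_subalg[OF subalg])
  have "AE x in M. psistar (q x) (a1 x) (a0 x) (D x) (Yobs D Y1 Y0 x) - \<tau> x = u x + r x"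
    using overlap(2)
    by eventually_elim (use overlap(1) in \<open>auto simp: u_def r_def h_def intro: psistar_change_regression\<close>)
  then have "AE x in M. (psistar (q x) (a1 x) (a0 x) (D x) (Yobs D Y1 Y0 x) - \<tau> x)\<^sup>2 = (u x + r x)\<^sup>2"
    by (auto elim: eventually_mono)
  then have "AE x in M. real_cond_exp M G (\<lambda>x. (psistar (q x) (a1 x) (a0 x) (D x) (Yobs D Y1 Y0 x) - \<tau> x)\<^sup>2) x
      = real_cond_exp M G (\<lambda>x. (u x + r x)\<^sup>2) x"
    by (rule G.real_cond_exp_cong) (unfold Yobs_def psistar_def, measurable)
  moreover have "AE x in M. real_cond_exp M G (\<lambda>x. (u x + r x)\<^sup>2) x
      = real_cond_exp M G (\<lambda>x. (u x)\<^sup>2) x + 2 * real_cond_exp M G (\<lambda>x. u x * r x) x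
        + real_cond_exp M G (\<lambda>x. (r x)\<^sup>2) x"
    using u r by (rule G.real_cond_exp_power2_add)
  moreover have "AE x in M. real_cond_exp M F (\<lambda>x. u x * r x) x = 0"
    using real_cond_exp_cross_term[OF h_F h \<tau>_F \<tau>(2)] unfolding u_def r_def by (simp add: mult_ac)
  then have "AE x in M. real_cond_exp M G (\<lambda>x. u x * r x) x = real_cond_exp M G (\<lambda>_. 0) x"
    using subalg G square_integrable_mult_integrable[OF u r]
    by (intro G.real_cond_exp_nested_cong) simp_all
  moreover have "AE x in M. real_cond_exp M G (\<lambda>x. (r x)\<^sup>2) x
      = real_cond_exp M G (\<lambda>x. q x * (1 - q x) * (h x)\<^sup>2) x"
  proof (rule G.real_cond_exp_nested_cong[OF subalg G])
    show "AE x in M. real_cond_exp M F (\<lambda>x. (r x)\<^sup>2) x = q x * (1 - q x) * (h x)\<^sup>2"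
      unfolding r_def by (rule real_cond_exp_square_term[OF h_F h])
  qed (use r in \<open>simp_all add: square_integrable_def\<close>)
  moreover note G.real_cond_exp_const[of 0]
  ultimately show ?thesis
    unfolding u_def h_def by eventually_elim simp
qed

end

section \<open>The IPW estimators\<close>

locale ipw_setting = prob_space M
  for M :: "'a measure" +
  fixes X :: "'a \<Rightarrow> real^'k::finite" and D Y0 Y1 :: "'a \<Rightarrow> real"
    and zidx :: "'l::finite \<Rightarrow> 'k" and tidx :: "'kt::finite \<Rightarrow> 'k" and V :: "real^'r::finite^'k"
    and c :: real
  assumes X_measurable [measurable]: "X \<in> borel_measurable M"
    and D_measurable [measurable]: "D \<in> borel_measurable M"
    and Y0_measurable [measurable]: "Y0 \<in> borel_measurable M"
    and Y1_measurable [measurable]: "Y1 \<in> borel_measurable M"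
    and binary: "\<And>\<omega>. \<omega> \<in> space M \<Longrightarrow> D \<omega> = 0 \<or> D \<omega> = 1"
    and unconfounded: "cond_indep M (\<lambda>\<omega>. (Y0 \<omega>, Y1 \<omega>)) D X"
    and overlap: "c > 0" "AE \<omega> in M. c < condE M X D \<omega> \<and> condE M X D \<omega> < 1 - c"
    and Y0_square: "integrable M (\<lambda>\<omega>. (Y0 \<omega>)\<^sup>2)" and Y1_square: "integrable M (\<lambda>\<omega>. (Y1 \<omega>)\<^sup>2)"
    and p_eq_pt: "AE \<omega> in M. condE M X D \<omega> = condE M (\<lambda>\<omega>. subvec tidx (X \<omega>)) D \<omega>"
    and p_eq_q: "AE \<omega> in M. condE M X D \<omega> = condE M (\<lambda>\<omega>. transpose V *v X \<omega>) D \<omega>"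
begin

text \<open>Simplification would rewrite \<open>transpose V *v x\<close> to \<open>x v* V\<close> and so destroy the form \<open>V\<^sup>T X\<close>
  in which the index \<open>\<sigma>(V\<^sup>T X)\<close> of all conditional expectations is written.\<close>

declare transpose_matrix_vector [simp del]

abbreviation "VX \<equiv> \<lambda>\<omega>. transpose V *v X \<omega>"
abbreviation "Z \<equiv> \<lambda>\<omega>. subvec zidx (X \<omega>)"
abbreviation "Xt \<equiv> \<lambda>\<omega>. subvec tidx (X \<omega>)"
abbreviation "q \<equiv> condE M VX D"

lemma square_integrable_outcomes: "square_integrable M Y1" "square_integrable M Y0"
  using Y0_square Y1_square by (simp_all add: square_integrable_def)

lemma subalgebra_sigma_gen_X_VX: "subalgebra (sigma_gen M X) (sigma_gen M VX)"
  by (rule subalgebra_vimage_algebra_comp[OF borel_measurable_matrix_vector_mult[of "transpose V"]])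
    (rule refl)

lemma subalgebra_sigma_gen_X_subvec: "subalgebra (sigma_gen M X) (sigma_gen M (\<lambda>\<omega>. subvec idx (X \<omega>)))"
  by (rule subalgebra_vimage_algebra_comp[OF borel_measurable_subvec]) simp

lemma subalgebra_sigma_gen_VX_Z:
  assumes "cnt_A zidx V = CARD('l)"
  shows "subalgebra (sigma_gen M VX) (sigma_gen M Z)"
proof -
  have "{i. axis (zidx i) (1::real) \<in> range (\<lambda>c. V *v c)} = UNIV"
    using assms by (intro card_subset_eq) (auto simp: cnt_A_def)
  then have "\<forall>i. \<exists>e. axis (zidx i) (1::real) = V *v e"
    by blast
  then obtain e where e: "\<And>i. axis (zidx i) 1 = V *v e i"
    by metis
  have "x $ zidx i = e i \<bullet> (transpose V *v x)" for x :: "real^'k" and i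
    using cart_eq_inner_axis[of x "zidx i"] e[of i]
    by (metis dot_lmul_matrix vector_transpose_matrix inner_commute)
  then have "subvec zidx x = (\<chi> i. e i \<bullet> (transpose V *v x))" for x :: "real^'k"
    unfolding subvec_def by (simp add: vec_eq_iff)
  moreover have "(\<lambda>y::real^'r. \<chi> i. e i \<bullet> y) \<in> borel_measurable borel"
    by (intro borel_measurable_continuous_onI continuous_intros)
  ultimately show ?thesis
    by (intro subalgebra_vimage_algebra_comp) simp_all
qed

lemma sigma_gen_Xt_eq:
  assumes "bij tidx"
  shows "sigma_gen M Xt = sigma_gen M X"
proof (rule vimage_algebra_eqI)
  have "(\<lambda>y::real^'kt. \<chi> k. y $ inv tidx k) \<in> borel_measurable borel"
    by (intro borel_measurable_continuous_onI continuous_intros)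
  moreover have "x = (\<chi> k. subvec tidx x $ inv tidx k)" for x :: "real^'k"
    using assms by (simp add: subvec_def vec_eq_iff bij_is_surj surj_f_inv_f)
  ultimately show "subalgebra (sigma_gen M Xt) (sigma_gen M X)"
    by (intro subalgebra_vimage_algebra_comp) auto
  show "subalgebra (sigma_gen M X) (sigma_gen M Xt)"
    by (rule subalgebra_sigma_gen_X_subvec)
qed

lemma measurable_VX [measurable]: "VX \<in> borel_measurable M"
  by measurable

lemma measurable_subvec_X [measurable]: "(\<lambda>\<omega>. subvec idx (X \<omega>)) \<in> borel_measurable M"
  by measurable

lemma q_measurable: "q \<in> borel_measurable (sigma_gen M VX)"
  unfolding condE_def by simp

lemma q_eq_p: "AE \<omega> in M. real_cond_exp M (sigma_gen M X) D \<omega> = q \<omega>"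
  using p_eq_q unfolding condE_def by simp

lemma q_overlap: "AE \<omega> in M. c < q \<omega> \<and> q \<omega> < 1 - c"
  using overlap(2) p_eq_q by eventually_elim simp

lemma treated_outcome:
  assumes "Yj = Y0 \<or> Yj = Y1"
  shows "AE \<omega> in M. real_cond_exp M (sigma_gen M X) (\<lambda>\<omega>. D \<omega> * Yj \<omega>) \<omega>
    = q \<omega> * real_cond_exp M (sigma_gen M X) Yj \<omega>"
proof -
  obtain g :: "real \<times> real \<Rightarrow> real" where g: "g = fst \<or> g = snd" and Yj: "Yj = (\<lambda>\<omega>. g (Y0 \<omega>, Y1 \<omega>))"
    using assms by fastforce
  have "AE \<omega> in M. condE M X (\<lambda>\<omega>. D \<omega> * g (Y0 \<omega>, Y1 \<omega>)) \<omega>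
      = condE M X D \<omega> * condE M X (\<lambda>\<omega>. g (Y0 \<omega>, Y1 \<omega>)) \<omega>"
    using g square_integrable_outcomes
    by (intro cond_indep_binary_factorization[OF unconfounded X_measurable _ D_measurable binary])
      (auto simp: square_integrable_integrable intro!: borel_measurable_continuous_onI continuous_on_fst
        continuous_on_snd continuous_on_id')
  then show ?thesis
    using p_eq_q unfolding Yj condE_def by eventually_elim simp
qed

lemma propensity_score_X: "propensity_score M (sigma_gen M X) D Y1 Y0 q c"
proof (intro propensity_score.intro propensity_score_axioms.intro)
  show "prob_space_subalgebra M (sigma_gen M X)"
    by (intro prob_space_subalgebraI subalgebra_vimage_algebra X_measurable)
  show "q \<in> borel_measurable (sigma_gen M X)"
    using q_measurable by (rule measurable_from_subalg[OF subalgebra_sigma_gen_X_VX])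
qed (use binary square_integrable_outcomes overlap(1) q_overlap q_eq_p treated_outcome in simp_all)

lemma propensity_score_sigma_gen:
  assumes W: "subalgebra (sigma_gen M X) (sigma_gen M W)" "subalgebra (sigma_gen M W) (sigma_gen M VX)"
  shows "propensity_score M (sigma_gen M W) D Y1 Y0 q c"
  using propensity_score_X W(1) measurable_from_subalg[OF W(2) q_measurable]
  by (rule propensity_score.propensity_score_coarsen)

lemma sig2_psistar_decomposition:
  assumes W: "W \<in> borel_measurable M" "subalgebra (sigma_gen M X) (sigma_gen M W)"
    "subalgebra (sigma_gen M W) (sigma_gen M VX)" "subalgebra (sigma_gen M W) (sigma_gen M Z)"
    and a: "a1 \<in> borel_measurable (sigma_gen M W)" "a0 \<in> borel_measurable (sigma_gen M W)"
      "square_integrable M a1" "square_integrable M a0"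
  shows "AE \<omega> in M. sig2 M Z Y1 Y0 (\<lambda>\<omega>. psistar (q \<omega>) (a1 \<omega>) (a0 \<omega>) (D \<omega>) (Yobs D Y1 Y0 \<omega>)) \<omega>
    = sig2 M Z Y1 Y0 (\<lambda>\<omega>. psistar (q \<omega>) (condE M W Y1 \<omega>) (condE M W Y0 \<omega>) (D \<omega>) (Yobs D Y1 Y0 \<omega>)) \<omega>
      + condE M Z (\<lambda>\<omega>. q \<omega> * (1 - q \<omega>)
          * ((condE M W Y1 \<omega> - a1 \<omega>) / q \<omega> + (condE M W Y0 \<omega> - a0 \<omega>) / (1 - q \<omega>))\<^sup>2) \<omega>"
proof -
  interpret propensity_score M "sigma_gen M W" D Y1 Y0 q c
    using W(2,3) by (rule propensity_score_sigma_gen)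
  have "square_integrable M (condE M Z (\<lambda>\<omega>. Y1 \<omega> - Y0 \<omega>))"
    using square_integrable_diff[OF square_integrable_outcomes] by (intro square_integrable_condE) simp_all
  then show ?thesis
    unfolding sig2_def condE_def[of M Z] condE_def[of M W]
    by (intro real_cond_exp_psistar_decomposition[OF W(4) a]) (simp_all add: condE_def)
qed

lemma overlap_term_nonneg:
  assumes "h \<in> borel_measurable M"
  shows "AE \<omega> in M. 0 \<le> condE M Z (\<lambda>\<omega>. q \<omega> * (1 - q \<omega>) * (h \<omega>)\<^sup>2) \<omega>"
proof -
  interpret SZ: prob_space_subalgebra M "sigma_gen M Z"
    by (intro prob_space_subalgebraI subalgebra_vimage_algebra measurable_subvec_X)
  show ?thesis
    unfolding condE_def[of M Z]
  proof (intro SZ.real_cond_exp_pos)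
    show "AE \<omega> in M. 0 \<le> q \<omega> * (1 - q \<omega>) * (h \<omega>)\<^sup>2"
      using q_overlap by eventually_elim (use overlap(1) in \<open>auto intro!: mult_nonneg_nonneg\<close>)
  qed (use assms in measurable)
qed

lemma sigma_S_eq: "sigma_S M X D Y0 Y1 zidx V = sig2 M Z Y1 Y0 (\<lambda>\<omega>. psistar (q \<omega>) 0 0 (D \<omega>) (Yobs D Y1 Y0 \<omega>))"
  unfolding sigma_S_def psi_eq_psistar ..

lemma sigma_O_eq: "AE \<omega> in M. sigma_O M X D Y0 Y1 zidx \<omega>
    = sig2 M Z Y1 Y0 (\<lambda>\<omega>. psistar (q \<omega>) 0 0 (D \<omega>) (Yobs D Y1 Y0 \<omega>)) \<omega>"
  unfolding sigma_O_def psi_eq_psistar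
  by (intro sig2_cong) (use p_eq_q in \<open>auto elim!: eventually_mono simp: psistar_def Yobs_def\<close>)

lemma sigma_N_eq: "AE \<omega> in M. sigma_N M X D Y0 Y1 zidx tidx \<omega>
    = sig2 M Z Y1 Y0 (\<lambda>\<omega>. psistar (q \<omega>) 0 0 (D \<omega>) (Yobs D Y1 Y0 \<omega>)) \<omega>"
proof -
  have "AE \<omega> in M. condE M Xt D \<omega> = q \<omega>"
    using p_eq_q p_eq_pt by eventually_elim simp
  then show ?thesis
    unfolding sigma_N_def psi_eq_psistar
    by (intro sig2_cong) (auto elim!: eventually_mono simp: psistar_def Yobs_def)
qed

lemma sigma_Nstar_eq:
  assumes "bij tidx"
  shows "AE \<omega> in M. sigma_Nstar M X D Y0 Y1 zidx tidx \<omega>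
    = sig2 M Z Y1 Y0 (\<lambda>\<omega>. psistar (q \<omega>) (condE M X Y1 \<omega>) (condE M X Y0 \<omega>) (D \<omega>) (Yobs D Y1 Y0 \<omega>)) \<omega>"
  unfolding sigma_Nstar_def condE_def[of M Xt] sigma_gen_Xt_eq[OF assms] condE_def[of M X, symmetric]
  by (intro sig2_cong) (use p_eq_q in \<open>auto elim!: eventually_mono simp: psistar_def Yobs_def\<close>)

lemma sig2_psistar_decomposition_X:
  assumes "a1 \<in> borel_measurable (sigma_gen M X)" "a0 \<in> borel_measurable (sigma_gen M X)"
      "square_integrable M a1" "square_integrable M a0"
  shows "AE \<omega> in M. sig2 M Z Y1 Y0 (\<lambda>\<omega>. psistar (q \<omega>) (a1 \<omega>) (a0 \<omega>) (D \<omega>) (Yobs D Y1 Y0 \<omega>)) \<omega>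
    = sig2 M Z Y1 Y0 (\<lambda>\<omega>. psistar (q \<omega>) (condE M X Y1 \<omega>) (condE M X Y0 \<omega>) (D \<omega>) (Yobs D Y1 Y0 \<omega>)) \<omega>
      + condE M Z (\<lambda>\<omega>. q \<omega> * (1 - q \<omega>)
          * ((condE M X Y1 \<omega> - a1 \<omega>) / q \<omega> + (condE M X Y0 \<omega> - a0 \<omega>) / (1 - q \<omega>))\<^sup>2) \<omega>"
  by (rule sig2_psistar_decomposition[OF X_measurable subalgebra_refl subalgebra_sigma_gen_X_VX
        subalgebra_sigma_gen_X_subvec assms])

lemma corollary1_case1:
  assumes bij: "bij tidx" and Z_in_VX: "cnt_A zidx V = CARD('l)"
  shows "avar_le M (avar_N M X D Y0 Y1 zidx tidx) (avar_S M X D Y0 Y1 zidx V)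
    \<and> avar_le M (avar_S M X D Y0 Y1 zidx V) (avar_P M X D Y0 Y1 zidx)
    \<and> avar_eq M (avar_P M X D Y0 Y1 zidx) (avar_O M X D Y0 Y1 zidx)
    \<and> (AE \<omega> in M. sigma_P M X D Y0 Y1 zidx \<omega> = sigma_Sstar M X D Y0 Y1 zidx V \<omega>
         + condE M (\<lambda>\<omega>. subvec zidx (X \<omega>))
             (\<lambda>\<omega>. let q = condE M (\<lambda>\<omega>. transpose V *v X \<omega>) D \<omega>;
                      m1 = condE M (\<lambda>\<omega>. transpose V *v X \<omega>) Y1 \<omega>;
                      m0 = condE M (\<lambda>\<omega>. transpose V *v X \<omega>) Y0 \<omega>
                  in q * (1 - q) * (m1 / q + m0 / (1 - q))\<^sup>2) \<omega>)
    \<and> (AE \<omega> in M. sigma_Sstar M X D Y0 Y1 zidx V \<omega> = sigma_Nstar M X D Y0 Y1 zidx tidx \<omega>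
         + condE M (\<lambda>\<omega>. subvec zidx (X \<omega>))
             (\<lambda>\<omega>. let q = condE M (\<lambda>\<omega>. transpose V *v X \<omega>) D \<omega>;
                      dm1 = condE M X Y1 \<omega> - condE M (\<lambda>\<omega>. transpose V *v X \<omega>) Y1 \<omega>;
                      dm0 = condE M X Y0 \<omega> - condE M (\<lambda>\<omega>. transpose V *v X \<omega>) Y0 \<omega>
                  in q * (1 - q) * (dm1 / q + dm0 / (1 - q))\<^sup>2) \<omega>)"
proof -
  have mVX: "condE M VX Y1 \<in> borel_measurable (sigma_gen M X)"
    "condE M VX Y0 \<in> borel_measurable (sigma_gen M X)"
    unfolding condE_def by (intro measurable_from_subalg[OF subalgebra_sigma_gen_X_VX]; simp)+
  have sq_mVX: "square_integrable M (condE M VX Y1)" "square_integrable M (condE M VX Y0)"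
    using square_integrable_outcomes by (auto intro: square_integrable_condE)
  note S_vs_N = sig2_psistar_decomposition_X[OF mVX sq_mVX]
  note O_vs_S = sig2_psistar_decomposition[OF measurable_VX subalgebra_sigma_gen_X_VX subalgebra_refl
      subalgebra_sigma_gen_VX_Z[OF Z_in_VX] borel_measurable_const borel_measurable_const
      square_integrable_zero square_integrable_zero, simplified]
  have avar_N: "avar_N M X D Y0 Y1 zidx tidx = sigma_Nstar M X D Y0 Y1 zidx tidx"
    using bij by (simp add: avar_N_def cnt_T_def bij_is_surj)
  have avar_S: "avar_S M X D Y0 Y1 zidx V = sigma_Sstar M X D Y0 Y1 zidx V"
    using Z_in_VX by (simp add: avar_S_def)
  have S_eq_N: "AE \<omega> in M. sigma_Sstar M X D Y0 Y1 zidx V \<omega> = sigma_Nstar M X D Y0 Y1 zidx tidx \<omega>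
      + condE M Z (\<lambda>\<omega>. q \<omega> * (1 - q \<omega>) * ((condE M X Y1 \<omega> - condE M VX Y1 \<omega>) / q \<omega>
          + (condE M X Y0 \<omega> - condE M VX Y0 \<omega>) / (1 - q \<omega>))\<^sup>2) \<omega>"
    using S_vs_N sigma_Nstar_eq[OF bij] unfolding sigma_Sstar_def by eventually_elim simp
  have P_eq_S: "AE \<omega> in M. sigma_P M X D Y0 Y1 zidx \<omega> = sigma_Sstar M X D Y0 Y1 zidx V \<omega>
      + condE M Z (\<lambda>\<omega>. q \<omega> * (1 - q \<omega>) * (condE M VX Y1 \<omega> / q \<omega>
          + condE M VX Y0 \<omega> / (1 - q \<omega>))\<^sup>2) \<omega>"
    using O_vs_S sigma_O_eq unfolding sigma_Sstar_def sigma_P_def by eventually_elim simp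
  have "AE \<omega> in M. 0 \<le> condE M Z (\<lambda>\<omega>. q \<omega> * (1 - q \<omega>) * ((condE M X Y1 \<omega> - condE M VX Y1 \<omega>) / q \<omega>
      + (condE M X Y0 \<omega> - condE M VX Y0 \<omega>) / (1 - q \<omega>))\<^sup>2) \<omega>"
    by (rule overlap_term_nonneg) measurable
  with S_eq_N have "AE \<omega> in M. sigma_Nstar M X D Y0 Y1 zidx tidx \<omega> \<le> sigma_Sstar M X D Y0 Y1 zidx V \<omega>"
    by eventually_elim simp
  moreover have "AE \<omega> in M. 0 \<le> condE M Z (\<lambda>\<omega>. q \<omega> * (1 - q \<omega>) * (condE M VX Y1 \<omega> / q \<omega>
      + condE M VX Y0 \<omega> / (1 - q \<omega>))\<^sup>2) \<omega>"
    by (rule overlap_term_nonneg) measurable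
  with P_eq_S have "AE \<omega> in M. sigma_Sstar M X D Y0 Y1 zidx V \<omega> \<le> sigma_P M X D Y0 Y1 zidx \<omega>"
    by eventually_elim simp
  ultimately show ?thesis
    using S_eq_N P_eq_S
    unfolding avar_le_def avar_eq_def avar_N avar_S avar_P_def avar_O_def sigma_P_def Let_def
    by simp
qed

lemma corollary1_case2:
  assumes bij: "bij tidx" and Z_not_in_VX: "cnt_A zidx V < CARD('l)"
  shows "avar_le M (avar_N M X D Y0 Y1 zidx tidx) (avar_S M X D Y0 Y1 zidx V)
    \<and> avar_eq M (avar_S M X D Y0 Y1 zidx V) (avar_P M X D Y0 Y1 zidx)
    \<and> avar_eq M (avar_P M X D Y0 Y1 zidx) (avar_O M X D Y0 Y1 zidx)
    \<and> (AE \<omega> in M. sigma_S M X D Y0 Y1 zidx V \<omega> = sigma_P M X D Y0 Y1 zidx \<omega>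
                 \<and> sigma_P M X D Y0 Y1 zidx \<omega> = sigma_O M X D Y0 Y1 zidx \<omega>)"
proof -
  have avar_N: "avar_N M X D Y0 Y1 zidx tidx = sigma_Nstar M X D Y0 Y1 zidx tidx"
    using bij by (simp add: avar_N_def cnt_T_def bij_is_surj)
  have avar_S: "avar_S M X D Y0 Y1 zidx V = sigma_S M X D Y0 Y1 zidx V"
    using Z_not_in_VX by (simp add: avar_S_def)
  have "AE \<omega> in M. 0 \<le> condE M Z (\<lambda>\<omega>. q \<omega> * (1 - q \<omega>) * (condE M X Y1 \<omega> / q \<omega>
      + condE M X Y0 \<omega> / (1 - q \<omega>))\<^sup>2) \<omega>"
    by (rule overlap_term_nonneg) measurable
  with sig2_psistar_decomposition_X[OF borel_measurable_const borel_measurable_const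
      square_integrable_zero square_integrable_zero]
    sigma_Nstar_eq[OF bij]
  have "AE \<omega> in M. sigma_Nstar M X D Y0 Y1 zidx tidx \<omega> \<le> sigma_S M X D Y0 Y1 zidx V \<omega>"
    unfolding sigma_S_eq by eventually_elim simp
  then show ?thesis
    using sigma_O_eq unfolding avar_le_def avar_eq_def avar_N avar_S avar_P_def avar_O_def sigma_P_def sigma_S_eq
    by (auto elim: eventually_mono)
qed

lemma corollary1_case3:
  assumes Xt_proper: "\<not> surj tidx" and same_count: "cnt_T zidx tidx = cnt_A zidx V"
    and Z_not_in_VX: "cnt_A zidx V < CARD('l)"
  shows "avar_eq M (avar_N M X D Y0 Y1 zidx tidx) (avar_S M X D Y0 Y1 zidx V)
    \<and> avar_eq M (avar_S M X D Y0 Y1 zidx V) (avar_P M X D Y0 Y1 zidx)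
    \<and> avar_eq M (avar_P M X D Y0 Y1 zidx) (avar_O M X D Y0 Y1 zidx)
    \<and> (AE \<omega> in M. sigma_N M X D Y0 Y1 zidx tidx \<omega> = sigma_S M X D Y0 Y1 zidx V \<omega>
                 \<and> sigma_S M X D Y0 Y1 zidx V \<omega> = sigma_P M X D Y0 Y1 zidx \<omega>
                 \<and> sigma_P M X D Y0 Y1 zidx \<omega> = sigma_O M X D Y0 Y1 zidx \<omega>)"
proof -
  have avar_N: "avar_N M X D Y0 Y1 zidx tidx = sigma_N M X D Y0 Y1 zidx tidx"
    using same_count Z_not_in_VX by (simp add: avar_N_def)
  have avar_S: "avar_S M X D Y0 Y1 zidx V = sigma_S M X D Y0 Y1 zidx V"
    using Z_not_in_VX by (simp add: avar_S_def)
  show ?thesis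
    using sigma_O_eq sigma_N_eq
    unfolding avar_eq_def avar_N avar_S avar_P_def avar_O_def sigma_P_def sigma_S_eq
    by (auto elim: eventually_elim2)
qed

end

text \<open>The hypotheses \<open>Zsub\<close>, \<open>Xtsub\<close>, \<open>Vorth\<close> and \<open>C3_bdd\<close> are only needed for the asymptotic
  normality behind the variance formulas, not for the comparison of the variances themselves.\<close>

theorem corollary1:
  fixes M :: "'a measure"
    and X :: "'a \<Rightarrow> real^'k::finite"
    and D Y0 Y1 :: "'a \<Rightarrow> real"
    and zidx :: "'l::finite \<Rightarrow> 'k"
    and tidx :: "'kt::finite \<Rightarrow> 'k"
    and V :: "real^'r::finite^'k"
    and c :: real
  assumes prob: "prob_space M"
    and meas: "X \<in> borel_measurable M" "D \<in> borel_measurable M"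
              "Y0 \<in> borel_measurable M" "Y1 \<in> borel_measurable M"
    and binD: "\<forall>\<omega>\<in>space M. D \<omega> = 0 \<or> D \<omega> = 1"
    and Zsub: "inj zidx"
    and Xtsub: "inj tidx"
    and Vorth: "transpose V ** V = mat 1"
    and C1_indep: "cond_indep M (\<lambda>\<omega>. (Y0 \<omega>, Y1 \<omega>)) D X"
    and C1_overlap: "c > 0" "AE \<omega> in M. c < condE M X D \<omega> \<and> condE M X D \<omega> < 1 - c"
    and C3_int: "integrable M (\<lambda>\<omega>. (Y0 \<omega>)\<^sup>2)" "integrable M (\<lambda>\<omega>. (Y1 \<omega>)\<^sup>2)"
    and C3_bdd: "\<exists>B. AE \<omega> in M. condE M X (\<lambda>\<omega>. (Y0 \<omega>)\<^sup>2) \<omega> \<le> B \<and> condE M X (\<lambda>\<omega>. (Y1 \<omega>)\<^sup>2) \<omega> \<le> B"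
    and p_eq_pt: "AE \<omega> in M. condE M X D \<omega> = condE M (\<lambda>\<omega>. subvec tidx (X \<omega>)) D \<omega>"
    and p_eq_q: "AE \<omega> in M. condE M X D \<omega> = condE M (\<lambda>\<omega>. transpose V *v X \<omega>) D \<omega>"
  shows
   \<comment> \<open>Case 1\<close>
   "(bij tidx \<and> cnt_A zidx V = CARD('l) \<longrightarrow>
      avar_le M (avar_N M X D Y0 Y1 zidx tidx) (avar_S M X D Y0 Y1 zidx V)
    \<and> avar_le M (avar_S M X D Y0 Y1 zidx V) (avar_P M X D Y0 Y1 zidx)
    \<and> avar_eq M (avar_P M X D Y0 Y1 zidx) (avar_O M X D Y0 Y1 zidx)
    \<and> (AE \<omega> in M. sigma_P M X D Y0 Y1 zidx \<omega> = sigma_Sstar M X D Y0 Y1 zidx V \<omega>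
         + condE M (\<lambda>\<omega>. subvec zidx (X \<omega>))
             (\<lambda>\<omega>. let q = condE M (\<lambda>\<omega>. transpose V *v X \<omega>) D \<omega>;
                      m1 = condE M (\<lambda>\<omega>. transpose V *v X \<omega>) Y1 \<omega>;
                      m0 = condE M (\<lambda>\<omega>. transpose V *v X \<omega>) Y0 \<omega>
                  in q * (1 - q) * (m1 / q + m0 / (1 - q))\<^sup>2) \<omega>)
    \<and> (AE \<omega> in M. sigma_Sstar M X D Y0 Y1 zidx V \<omega> = sigma_Nstar M X D Y0 Y1 zidx tidx \<omega>
         + condE M (\<lambda>\<omega>. subvec zidx (X \<omega>))
             (\<lambda>\<omega>. let q = condE M (\<lambda>\<omega>. transpose V *v X \<omega>) D \<omega>;
                      dm1 = condE M X Y1 \<omega> - condE M (\<lambda>\<omega>. transpose V *v X \<omega>) Y1 \<omega>;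
                      dm0 = condE M X Y0 \<omega> - condE M (\<lambda>\<omega>. transpose V *v X \<omega>) Y0 \<omega>
                  in q * (1 - q) * (dm1 / q + dm0 / (1 - q))\<^sup>2) \<omega>))
   \<and> \<comment> \<open>Case 2\<close>
    (bij tidx \<and> cnt_A zidx V < CARD('l) \<longrightarrow>
      avar_le M (avar_N M X D Y0 Y1 zidx tidx) (avar_S M X D Y0 Y1 zidx V)
    \<and> avar_eq M (avar_S M X D Y0 Y1 zidx V) (avar_P M X D Y0 Y1 zidx)
    \<and> avar_eq M (avar_P M X D Y0 Y1 zidx) (avar_O M X D Y0 Y1 zidx)
    \<and> (AE \<omega> in M. sigma_S M X D Y0 Y1 zidx V \<omega> = sigma_P M X D Y0 Y1 zidx \<omega>
                 \<and> sigma_P M X D Y0 Y1 zidx \<omega> = sigma_O M X D Y0 Y1 zidx \<omega>))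
   \<and> \<comment> \<open>Case 3\<close>
    (\<not> surj tidx \<and> cnt_T zidx tidx = cnt_A zidx V \<and> cnt_A zidx V < CARD('l) \<longrightarrow>
      avar_eq M (avar_N M X D Y0 Y1 zidx tidx) (avar_S M X D Y0 Y1 zidx V)
    \<and> avar_eq M (avar_S M X D Y0 Y1 zidx V) (avar_P M X D Y0 Y1 zidx)
    \<and> avar_eq M (avar_P M X D Y0 Y1 zidx) (avar_O M X D Y0 Y1 zidx)
    \<and> (AE \<omega> in M. sigma_N M X D Y0 Y1 zidx tidx \<omega> = sigma_S M X D Y0 Y1 zidx V \<omega>
                 \<and> sigma_S M X D Y0 Y1 zidx V \<omega> = sigma_P M X D Y0 Y1 zidx \<omega>
                 \<and> sigma_P M X D Y0 Y1 zidx \<omega> = sigma_O M X D Y0 Y1 zidx \<omega>))"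
proof -
  interpret ipw_setting M X D Y0 Y1 zidx tidx V c
    using prob meas binD C1_indep C1_overlap C3_int p_eq_pt p_eq_q
    by (intro ipw_setting.intro ipw_setting_axioms.intro) auto
  show ?thesis
    using corollary1_case1 corollary1_case2 corollary1_case3 by blast
qed

end
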